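(* Let $N\ge 2$, let $T_N$ be the homogeneous tree in which every vertex has degree $N$, and fix a root $o$. Let $m>1$ and $(p,q)\in G_1=\{(p,q): p\ge0,\ m-1-p<q<m\}$. Then for every $\epsilon>0$ there exists a weight $\mu$ on $T_N$ such that $$W_o(n)\asymp n^{\frac{mp+q}{p+q-m+1}}(\ln n)^{\frac{m-1}{p+q-m+1}+\epsilon}\quad\text{for } n\ge 2,$$ and the inequality $\Delta_m u+u^p|\nabla u|^q\le 0$ on $T_N$ admits a nontrivial positive solution.
   Context: A weight on a graph $(V,E)$ is a symmetric function $\mu:V\times V\to[0,\infty)$ with $\mu_{xy}=\mu_{yx}>0$ if and only if $x\sim y$ (adjacent); $\mu(x)=\sum_{y\sim x}\mu_{xy}$. For $m>1$, $\Delta_m u(x)=\frac{1}{\mu(x)}\sum_{y\sim x}\mu_{xy}|u(y)-u(x)|^{m-2}(u(y)-u(x))$ and $|\nabla u(x)|=\big(\sum_{y\sim x}\frac{\mu_{xy}}{2\mu(x)}(u(y)-u(x))^2\big)^{1/2}$. $d$ is the graph distance, $B(o,n)=\{x: d(o,x)\le n\}$, $W_o(n)=\sum_{x\in B(o,n),\,y\in V,\,d(o,x)<d(o,y)}\mu_{xy}$. $f(n)\asymp g(n)$ for $n\ge2$ means there are constants $c,C>0$ with $c\,g(n)\le f(n)\le C\,g(n)$ for all $n\ge 2$. A nontrivial positive solution is a non-constant $u:V\to(0,\infty)$ with $\Delta_m u(x)+u(x)^p|\nabla u(x)|^q\le0$ for all $x\in V$. *)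

theory Defs
  imports Complex_Main
begin

text \<open>Model of T_N: reduced words over the alphabet {0..N-1} (no two consecutive
letters equal), i.e. the Cayley graph of the free product of N copies of Z/2.
Two words are adjacent iff one is obtained from the other by appending one letter.
Every vertex has degree exactly N and the graph is a tree.\<close>

definition tree_V :: "nat \<Rightarrow> nat list set" where
  "tree_V N = {w. (\<forall>a\<in>set w. a < N) \<and> (\<forall>i. Suc i < length w \<longrightarrow> w ! i \<noteq> w ! Suc i)}"

definition tree_adj :: "nat \<Rightarrow> nat list \<Rightarrow> nat list \<Rightarrow> bool" where
  "tree_adj N x y \<longleftrightarrow> x \<in> tree_V N \<and> y \<in> tree_V N \<and>
     ((\<exists>a. y = x @ [a]) \<or> (\<exists>a. x = y @ [a]))"

definition is_weight :: "'a set \<Rightarrow> ('a \<Rightarrow> 'a \<Rightarrow> bool) \<Rightarrow> ('a \<Rightarrow> 'a \<Rightarrow> real) \<Rightarrow> bool" where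
  "is_weight V adj \<mu> \<longleftrightarrow>
     (\<forall>x\<in>V. \<forall>y\<in>V. \<mu> x y \<ge> 0 \<and> \<mu> x y = \<mu> y x \<and> (\<mu> x y > 0 \<longleftrightarrow> adj x y))"

definition nbrs :: "'a set \<Rightarrow> ('a \<Rightarrow> 'a \<Rightarrow> bool) \<Rightarrow> 'a \<Rightarrow> 'a set" where
  "nbrs V adj x = {y\<in>V. adj x y}"

definition vmeas :: "'a set \<Rightarrow> ('a \<Rightarrow> 'a \<Rightarrow> bool) \<Rightarrow> ('a \<Rightarrow> 'a \<Rightarrow> real) \<Rightarrow> 'a \<Rightarrow> real" where
  "vmeas V adj \<mu> x = (\<Sum>y\<in>nbrs V adj x. \<mu> x y)"

definition mlap :: "'a set \<Rightarrow> ('a \<Rightarrow> 'a \<Rightarrow> bool) \<Rightarrow> ('a \<Rightarrow> 'a \<Rightarrow> real) \<Rightarrow> real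
    \<Rightarrow> ('a \<Rightarrow> real) \<Rightarrow> 'a \<Rightarrow> real" where
  "mlap V adj \<mu> m u x = (1 / vmeas V adj \<mu> x) *
     (\<Sum>y\<in>nbrs V adj x. \<mu> x y * (\<bar>u y - u x\<bar> powr (m - 2)) * (u y - u x))"

definition gradn :: "'a set \<Rightarrow> ('a \<Rightarrow> 'a \<Rightarrow> bool) \<Rightarrow> ('a \<Rightarrow> 'a \<Rightarrow> real)
    \<Rightarrow> ('a \<Rightarrow> real) \<Rightarrow> 'a \<Rightarrow> real" where
  "gradn V adj \<mu> u x = sqrt (\<Sum>y\<in>nbrs V adj x. \<mu> x y / (2 * vmeas V adj \<mu> x) * (u y - u x)^2)"

definition gdist :: "('a \<Rightarrow> 'a \<Rightarrow> bool) \<Rightarrow> 'a \<Rightarrow> 'a \<Rightarrow> nat" where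
  "gdist adj x y = (LEAST n. (adj ^^ n) x y)"

definition ball :: "'a set \<Rightarrow> ('a \<Rightarrow> 'a \<Rightarrow> bool) \<Rightarrow> 'a \<Rightarrow> nat \<Rightarrow> 'a set" where
  "ball V adj r n = {x\<in>V. gdist adj r x \<le> n}"

definition W_o :: "'a set \<Rightarrow> ('a \<Rightarrow> 'a \<Rightarrow> bool) \<Rightarrow> ('a \<Rightarrow> 'a \<Rightarrow> real) \<Rightarrow> 'a \<Rightarrow> nat \<Rightarrow> real" where
  "W_o V adj \<mu> r n = (\<Sum>x\<in>ball V adj r n.
       \<Sum>y\<in>{y\<in>nbrs V adj x. gdist adj r x < gdist adj r y}. \<mu> x y)"

text \<open>The power |\<nabla>u|^q with the conventions t^0 = 1; for q < 0 we require
|\<nabla>u| > 0 separately (otherwise the term would be +\<infinity>).\<close>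
definition gpow :: "real \<Rightarrow> real \<Rightarrow> real" where
  "gpow g q = (if q = 0 then 1 else g powr q)"

definition nontriv_pos_solution :: "'a set \<Rightarrow> ('a \<Rightarrow> 'a \<Rightarrow> bool) \<Rightarrow> ('a \<Rightarrow> 'a \<Rightarrow> real)
    \<Rightarrow> real \<Rightarrow> real \<Rightarrow> real \<Rightarrow> ('a \<Rightarrow> real) \<Rightarrow> bool" where
  "nontriv_pos_solution V adj \<mu> m p q u \<longleftrightarrow>
     (\<forall>x\<in>V. u x > 0) \<and> (\<exists>x\<in>V. \<exists>y\<in>V. u x \<noteq> u y) \<and>
     (\<forall>x\<in>V. (q < 0 \<longrightarrow> gradn V adj \<mu> u x > 0) \<and>
        mlap V adj \<mu> m u x + (u x) powr p * gpow (gradn V adj \<mu> u x) q \<le> 0)"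

end

(*
  Radial construction. Root T_N at the empty word and let the N(N-1)^k edges between
  levels k and k+1 share a total weight w_k. For a radial function u = tau f(|x|) with f
  decreasing, Delta_m u at level k+1 equals -tau^(m-1) (Phi_(k+1) - Phi_k) / (w_k + w_(k+1)),
  where Phi_k = w_k (f_k - f_(k+1))^(m-1) is the flux through level k; at the root it is
  -tau^(m-1) (f_0 - f_1)^(m-1). So u is a supersolution of Delta_m u = 0 as soon as Phi increases.

  With t = k + 5 take f = t^(-gamma) (ln t)^(-delta) and Phi = (ln t)^sigma. Then
  f_k - f_(k+1) and |grad u| / tau are comparable to t^(-gamma-1) (ln t)^(-delta), and
  w_k = Phi_k / (f_k - f_(k+1))^(m-1) is comparable to t^(alpha-1) (ln t)^beta, the increment
  of t^alpha (ln t)^beta. Distances from o and word lengths differ by at most |o|, so W_o(n)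
  lies between sums of the w_k over k < n - |o| and over k < n + 1 + |o|, which gives the
  growth n^alpha (ln n)^beta.

  The exponents are tuned so that f^p (f_k - f_(k+1))^q (w_k + w_(k+1)) is comparable to
  t^(-1) (ln t)^(beta - delta (p + q)), which is dominated by Phi_(k+1) - Phi_k, comparable to
  t^(-1) (ln t)^(sigma - 1), because delta (p + q - m + 1) >= 1; here epsilon > 0 leaves room
  for sigma > 0. Finally u^p |grad u|^q scales like tau^(p+q) while Delta_m u scales like
  tau^(m-1), and p + q > m - 1, so a small tau makes Delta_m u + u^p |grad u|^q <= 0.
*)

theory Submission
  imports Defs
begin

section \<open>Powers of logarithms\<close>

definition plog :: "real \<Rightarrow> real \<Rightarrow> real \<Rightarrow> real" where
  "plog a b t = t powr a * ln t powr b"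

lemma plog_pos: "1 < t \<Longrightarrow> 0 < plog a b t"
  by (simp add: plog_def)

lemma plog_mult: "1 < t \<Longrightarrow> plog a b t * plog c d t = plog (a + c) (b + d) t"
  by (simp add: plog_def powr_add)

lemma plog_powr: "1 < t \<Longrightarrow> plog a b t powr e = plog (a * e) (b * e) t"
  by (simp add: plog_def powr_mult powr_powr)

lemma plog_mult_ln: "1 < t \<Longrightarrow> plog a b t * ln t = plog a (b + 1) t"
  by (simp add: plog_def powr_add mult.assoc)

lemma ln_ge_one: "exp 1 \<le> (t::real) \<Longrightarrow> 1 \<le> ln t"
  using ln_ge_iff[of t 1] by (simp add: less_le_trans[OF exp_gt_zero])

lemma exp_one_le_of_four_le: "4 \<le> (t::real) \<Longrightarrow> exp 1 \<le> t"
  using exp_le by simp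

lemma plog_mono_log_exponent: "exp 1 \<le> t \<Longrightarrow> b \<le> b' \<Longrightarrow> plog a b t \<le> plog a b' t"
  unfolding plog_def using ln_ge_one[of t]
  by (intro mult_left_mono powr_mono) auto

lemma plog_mono: "1 \<le> x \<Longrightarrow> x \<le> y \<Longrightarrow> 0 \<le> a \<Longrightarrow> 0 \<le> b \<Longrightarrow> plog a b x \<le> plog a b y"
  unfolding plog_def by (intro mult_mono powr_mono2) auto

lemma powr_le_two_powr_abs:
  assumes "1/2 \<le> x" "x \<le> (2::real)"
  shows "x powr a \<le> 2 powr \<bar>a\<bar>"
proof (cases "a \<ge> 0")
  case True
  then show ?thesis using assms by (simp add: powr_mono2)
next
  case False
  have "x powr a = (1/x) powr (-a)"
    using assms by (simp add: powr_divide powr_minus_divide)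
  also have "\<dots> \<le> 2 powr (-a)"
    using assms False by (intro powr_mono2) (auto simp: field_simps)
  finally show ?thesis using False by simp
qed

lemma plog_le_double:
  assumes "4 \<le> s" "4 \<le> t" "s \<le> 2 * t" "t \<le> 2 * s"
  shows "plog a b s \<le> 2 powr (\<bar>a\<bar> + \<bar>b\<bar>) * plog a b t"
proof -
  have ln4: "ln 4 = 2 * ln (2::real)"
    using ln_realpow[of 2 2] by simp
  have ln_s: "ln s \<le> ln 2 + ln t" and ln_t: "ln t \<le> ln 2 + ln s"
    using assms by (simp_all add: ln_mult_pos[symmetric])
  have "ln 4 \<le> ln t" "ln 4 \<le> ln s" "0 < ln t"
    using assms by simp_all
  then have ln_ratio: "1/2 \<le> ln s / ln t" "ln s / ln t \<le> 2"
    using ln4 ln_s ln_t by (simp_all add: le_divide_eq divide_le_eq)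
  have ratio: "1/2 \<le> s / t" "s / t \<le> 2"
    using assms by (simp_all add: le_divide_eq divide_le_eq)
  have "plog a b s = plog a b t * ((s / t) powr a * (ln s / ln t) powr b)"
    using assms by (simp add: plog_def powr_divide)
  also have "\<dots> \<le> plog a b t * (2 powr \<bar>a\<bar> * 2 powr \<bar>b\<bar>)"
    using plog_pos[of t a b] assms ratio ln_ratio
    by (intro mult_left_mono mult_mono powr_le_two_powr_abs) auto
  finally show ?thesis
    by (simp add: powr_add mult_ac)
qed

lemma plog_le_scaled:
  assumes "2 \<le> x" "x \<le> y" "y \<le> M * x" "0 \<le> a" "0 \<le> b"
  shows "plog a b y \<le> M powr a * (1 + ln M / ln 2) powr b * plog a b x"
proof -
  have "1 * x \<le> M * x"
    using assms(2,3) by linarith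
  then have M: "1 \<le> M"
    using assms by (auto dest: mult_right_le_imp_le)
  have "ln y \<le> ln M + ln x"
    using assms M by (simp add: ln_mult_pos[symmetric])
  also have "ln M \<le> ln x * (ln M / ln 2)"
  proof -
    have "1 * ln M \<le> (ln x / ln 2) * ln M"
      using assms M by (intro mult_right_mono) simp_all
    then show ?thesis by simp
  qed
  finally have ln_y: "ln y \<le> ln x * (1 + ln M / ln 2)"
    by (simp add: algebra_simps)
  have "plog a b y \<le> (M * x) powr a * (ln x * (1 + ln M / ln 2)) powr b"
    unfolding plog_def using assms ln_y by (intro mult_mono powr_mono2) auto
  also have "\<dots> = M powr a * (1 + ln M / ln 2) powr b * plog a b x"
    unfolding plog_def using assms M by (simp add: powr_mult mult_ac)
  finally show ?thesis .
qed

lemma plog_has_real_derivative: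
  assumes "1 < x"
  shows "(plog a b has_real_derivative plog (a - 1) (b - 1) x * (a * ln x + b)) (at x)"
proof -
  have "((\<lambda>x. x powr a * ln x powr b) has_real_derivative
      a * x powr (a - 1) * ln x powr b + x powr a * (b * ln x powr (b - 1) * (1 / x))) (at x)"
    using assms by (auto intro!: derivative_eq_intros)
  moreover have "x powr a = x powr (a - 1) * x"
    using powr_add[of x "a - 1" 1] assms by simp
  moreover have "ln x powr b = ln x powr (b - 1) * ln x"
    using powr_add[of "ln x" "b - 1" 1] assms by simp
  ultimately show ?thesis
    unfolding plog_def[abs_def] using assms by (simp add: field_simps)
qed

lemma plog_derivative_factor_bounds:
  assumes "exp 1 \<le> x" "0 \<le> a" "0 \<le> b"
  shows "a * plog c (d + 1) x \<le> plog c d x * (a * ln x + b)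
    \<and> plog c d x * (a * ln x + b) \<le> (a + b) * plog c (d + 1) x"
proof -
  have x: "1 < x"
    using assms(1) one_less_exp_iff[of 1] by linarith
  have "1 \<le> ln x"
    using ln_ge_one assms by blast
  then have bounds: "a * ln x \<le> a * ln x + b" "a * ln x + b \<le> (a + b) * ln x"
    using assms mult_left_mono[of 1 "ln x" b] by (simp_all add: algebra_simps)
  have "0 \<le> plog c d x"
    using plog_pos[OF x] by (rule less_imp_le)
  from mult_left_mono[OF bounds(1) this] mult_left_mono[OF bounds(2) this]
  show ?thesis
    by (simp add: plog_mult_ln[OF x, symmetric] mult_ac)
qed

lemma plog_shift_le:
  assumes "2 \<le> x" "0 \<le> e" "0 \<le> a" "0 \<le> b"
  shows "plog a b (x + e) \<le> (1 + e / 2) powr a * (1 + ln (1 + e / 2) / ln 2) powr b * plog a b x"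
proof (rule plog_le_scaled)
  have "e * 2 \<le> e * x"
    using assms by (intro mult_left_mono) auto
  then show "x + e \<le> (1 + e / 2) * x"
    by (simp add: algebra_simps)
qed (use assms in auto)

lemma plog_le_of_le_double:
  assumes "1 \<le> y" "y \<le> 2 * x" "2 \<le> x" "0 \<le> a" "0 \<le> b"
  shows "plog a b y \<le> 2 powr a * 2 powr b * plog a b x"
proof -
  have "plog a b y \<le> plog a b (2 * x)"
    using assms by (intro plog_mono) auto
  also have "\<dots> \<le> 2 powr a * (1 + ln 2 / ln 2) powr b * plog a b x"
    using assms by (intro plog_le_scaled) auto
  finally show ?thesis
    by simp
qed

lemma plog_upper_of_shifted:
  assumes ab: "0 \<le> a" "0 \<le> b" and e: "0 \<le> e" and C: "0 < C"
    and W: "\<And>n. 2 \<le> n \<Longrightarrow> W n \<le> C * plog a b (real n + e)"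
  obtains C' where "0 < C'" "\<And>n. 2 \<le> n \<Longrightarrow> W n \<le> C' * plog a b (real n)"
proof -
  define K where "K = (1 + e / 2) powr a * (1 + ln (1 + e / 2) / ln 2) powr b"
  have "0 \<le> ln (1 + e / 2) / ln 2"
    using e by simp
  then have "0 < 1 + ln (1 + e / 2) / ln 2" "0 < 1 + e / 2"
    using e by linarith+
  then have "0 < C * K"
    using C by (simp add: K_def)
  moreover have "W n \<le> C * K * plog a b (real n)" if n: "2 \<le> n" for n
  proof -
    have "W n \<le> C * plog a b (real n + e)"
      using W[OF n] .
    also have "\<dots> \<le> C * (K * plog a b (real n))"
      unfolding K_def using n ab e C by (intro mult_left_mono plog_shift_le) auto
    finally show ?thesis
      by (simp add: mult.assoc)
  qed
  ultimately show ?thesis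
    using that by blast
qed

lemma plog_lower_of_shifted:
  assumes ab: "0 \<le> a" "0 \<le> b" and c: "0 < c"
    and W: "\<And>n. 2 * d + 2 \<le> n \<Longrightarrow> c * plog a b (real (n - d) + 5) \<le> W n"
    and W\<^sub>0: "0 < W\<^sub>0" "\<And>n. W\<^sub>0 \<le> W n"
  obtains c' where "0 < c'" "\<And>n. 2 \<le> n \<Longrightarrow> c' * plog a b (real n) \<le> W n"
proof -
  define P where "P = plog a b (2 * real d + 2)"
  define c' where "c' = min (c / (2 powr a * 2 powr b)) (W\<^sub>0 / P)"
  have P: "0 < P"
    by (simp add: P_def plog_pos)
  then have "0 < c'"
    using c W\<^sub>0(1) by (simp add: c'_def)
  moreover have "c' * plog a b (real n) \<le> W n" if n: "2 \<le> n" for n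
  proof (cases "2 * d + 2 \<le> n")
    case True
    have "c' * plog a b (real n) \<le> c / (2 powr a * 2 powr b) * plog a b (real n)"
      using n plog_pos[of "real n" a b] by (intro mult_right_mono) (auto simp: c'_def)
    also have "\<dots> \<le> c / (2 powr a * 2 powr b) * (2 powr a * 2 powr b * plog a b (real (n - d) + 5))"
      using True ab c by (intro mult_left_mono plog_le_of_le_double) auto
    also have "\<dots> \<le> W n"
      using W[OF True] by simp
    finally show ?thesis .
  next
    case False
    have "c' * plog a b (real n) \<le> W\<^sub>0 / P * plog a b (real n)"
      using n plog_pos[of "real n" a b] by (intro mult_right_mono) (auto simp: c'_def)
    also have "\<dots> \<le> W\<^sub>0 / P * P"
    proof (rule mult_left_mono)
      show "plog a b (real n) \<le> P"
        unfolding P_def using False n ab by (intro plog_mono) auto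
    qed (use W\<^sub>0(1) P in simp)
    also have "\<dots> \<le> W n"
      using P W\<^sub>0(2)[of n] by simp
    finally show ?thesis .
  qed
  ultimately show ?thesis
    using that by blast
qed

lemma plog_growth_sandwich:
  fixes S W :: "nat \<Rightarrow> real"
  assumes ab: "0 \<le> a" "0 \<le> b" and cC: "0 < c" "0 < C"
    and S_lower: "\<And>j. 1 \<le> j \<Longrightarrow> c * plog a b (real j + 5) \<le> S j"
    and S_upper: "\<And>j. S j \<le> C * plog a b (real j + 5)"
    and W_lower: "\<And>n. S (n - d) \<le> W n" and W_upper: "\<And>n. W n \<le> S (n + 1 + d)"
    and W_pos: "0 < W\<^sub>0" "\<And>n. W\<^sub>0 \<le> W n"
  obtains c' C' where "0 < c'" "0 < C'"
    "\<And>n. 2 \<le> n \<Longrightarrow> c' * plog a b (real n) \<le> W n \<and> W n \<le> C' * plog a b (real n)"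
proof -
  have upper: "W n \<le> C * plog a b (real n + (real d + 6))" for n
    using W_upper[of n] S_upper[of "n + 1 + d"] by (simp add: add_ac)
  have "0 \<le> real d + 6"
    by simp
  then obtain C' where "0 < C'" "\<And>n. 2 \<le> n \<Longrightarrow> W n \<le> C' * plog a b (real n)"
    using plog_upper_of_shifted[OF ab _ cC(2) upper] by blast
  moreover have lower: "c * plog a b (real (n - d) + 5) \<le> W n" if "2 * d + 2 \<le> n" for n
  proof -
    have "1 \<le> n - d"
      using that by simp
    then show ?thesis
      using order_trans[OF S_lower W_lower[of n]] by blast
  qed
  then obtain c' where "0 < c'" "\<And>n. 2 \<le> n \<Longrightarrow> c' * plog a b (real n) \<le> W n"
    using plog_lower_of_shifted[OF ab cC(1) lower W_pos] by blast
  ultimately show ?thesis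
    using that by blast
qed

section \<open>Comparable sequences\<close>

definition comparable :: "(nat \<Rightarrow> real) \<Rightarrow> (nat \<Rightarrow> real) \<Rightarrow> bool" (infix \<open>\<asymp>\<close> 50) where
  "f \<asymp> g \<longleftrightarrow> (\<forall>k. 0 < g k) \<and>
     (\<exists>c C. 0 < c \<and> 0 < C \<and> (\<forall>k. c * g k \<le> f k \<and> f k \<le> C * g k))"

lemma comparableI:
  assumes "\<And>k. 0 < g k" "0 < c" "0 < C" "\<And>k. c * g k \<le> f k" "\<And>k. f k \<le> C * g k"
  shows "f \<asymp> g"
  using assms unfolding comparable_def by blast

lemma comparableE:
  assumes "f \<asymp> g"
  obtains c C where "0 < c" "0 < C" "\<And>k. c * g k \<le> f k" "\<And>k. f k \<le> C * g k"
  using assms unfolding comparable_def by blast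

lemma comparable_pos_right: "f \<asymp> g \<Longrightarrow> 0 < g k"
  unfolding comparable_def by blast

lemma comparable_pos:
  assumes "f \<asymp> g"
  shows "0 < f k"
proof -
  obtain c C where "0 < c" "\<And>k. c * g k \<le> f k"
    using assms by (rule comparableE) blast
  moreover have "0 < g k"
    using assms by (rule comparable_pos_right)
  ultimately show ?thesis
    using less_le_trans[OF mult_pos_pos] by blast
qed

lemma comparable_refl: "(\<And>k. 0 < g k) \<Longrightarrow> g \<asymp> g"
  by (rule comparableI[of _ 1 1]) simp_all

lemma comparable_sym:
  assumes "f \<asymp> g"
  shows "g \<asymp> f"
proof -
  obtain c C where c: "0 < c" "0 < C" "\<And>k. c * g k \<le> f k" "\<And>k. f k \<le> C * g k"
    using assms by (rule comparableE) blast
  show ?thesis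
  proof (rule comparableI[of _ "1 / C" "1 / c"])
    show "0 < f k" for k
      using assms by (rule comparable_pos)
    show "1 / C * f k \<le> g k" "g k \<le> 1 / c * f k" for k
      using c(3,4)[of k] c(1,2) by (simp_all add: pos_divide_le_eq pos_le_divide_eq mult.commute)
  qed (use c in simp_all)
qed

lemma comparable_trans:
  assumes "f \<asymp> g" "g \<asymp> h"
  shows "f \<asymp> h"
proof -
  obtain c C where c: "0 < c" "0 < C" "\<And>k. c * g k \<le> f k" "\<And>k. f k \<le> C * g k"
    using assms(1) by (rule comparableE) blast
  obtain d D where d: "0 < d" "0 < D" "\<And>k. d * h k \<le> g k" "\<And>k. g k \<le> D * h k"
    using assms(2) by (rule comparableE) blast
  show ?thesis
  proof (rule comparableI[of _ "c * d" "C * D"])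
    fix k
    have "c * (d * h k) \<le> c * g k" "C * g k \<le> C * (D * h k)"
      using c(1,2) d(3,4) by (simp_all add: mult_left_mono)
    then show "c * d * h k \<le> f k" "f k \<le> C * D * h k"
      using c(3,4)[where k = k] by (simp_all add: mult.assoc)
  qed (use assms(2) c d in \<open>simp_all add: comparable_pos_right\<close>)
qed

lemma comparable_mult:
  assumes "f \<asymp> g" "f' \<asymp> g'"
  shows "(\<lambda>k. f k * f' k) \<asymp> (\<lambda>k. g k * g' k)"
proof -
  obtain c C where c: "0 < c" "0 < C" "\<And>k. c * g k \<le> f k" "\<And>k. f k \<le> C * g k"
    using assms(1) by (rule comparableE) blast
  obtain d D where d: "0 < d" "0 < D" "\<And>k. d * g' k \<le> f' k" "\<And>k. f' k \<le> D * g' k"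
    using assms(2) by (rule comparableE) blast
  show ?thesis
  proof (rule comparableI[of _ "c * d" "C * D"])
    fix k
    have pos: "0 < g k" "0 < g' k" "0 < f k" "0 < f' k"
      using assms by (simp_all add: comparable_pos_right comparable_pos)
    have "(c * g k) * (d * g' k) \<le> f k * f' k"
      by (rule mult_mono) (use c d pos in auto)
    moreover have "f k * f' k \<le> (C * g k) * (D * g' k)"
      by (rule mult_mono) (use c d pos in auto)
    ultimately show "c * d * (g k * g' k) \<le> f k * f' k" "f k * f' k \<le> C * D * (g k * g' k)"
      by (simp_all add: mult_ac)
    show "0 < g k * g' k"
      using pos by simp
  qed (use c d in simp_all)
qed

lemma powr_between_min_max:
  fixes lo x hi e :: real
  assumes "0 < lo" "lo \<le> x" "x \<le> hi"
  shows "min (lo powr e) (hi powr e) \<le> x powr e \<and> x powr e \<le> max (lo powr e) (hi powr e)"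
proof (cases "0 \<le> e")
  case True
  have "lo powr e \<le> x powr e"
    using assms True by (intro powr_mono2) auto
  moreover have "x powr e \<le> hi powr e"
    using assms True by (intro powr_mono2) auto
  ultimately show ?thesis
    by (simp add: min_le_iff_disj le_max_iff_disj)
next
  case False
  have "hi powr e \<le> x powr e"
    using assms False by (intro powr_mono2') auto
  moreover have "x powr e \<le> lo powr e"
    using assms False by (intro powr_mono2') auto
  ultimately show ?thesis
    by (simp add: min_le_iff_disj le_max_iff_disj)
qed

lemma comparable_powr:
  assumes "f \<asymp> g"
  shows "(\<lambda>k. f k powr e) \<asymp> (\<lambda>k. g k powr e)"
proof -
  obtain c C where c: "0 < c" "0 < C" "\<And>k. c * g k \<le> f k" "\<And>k. f k \<le> C * g k"
    using assms by (rule comparableE) blast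
  have pos: "0 < g k" for k
    using assms by (rule comparable_pos_right)
  show ?thesis
  proof (rule comparableI[of _ "min (c powr e) (C powr e)" "max (c powr e) (C powr e)"])
    fix k
    have "min ((c * g k) powr e) ((C * g k) powr e) \<le> f k powr e
        \<and> f k powr e \<le> max ((c * g k) powr e) ((C * g k) powr e)"
      using c(1) c(3,4)[where k = k] pos[of k] by (intro powr_between_min_max) simp_all
    then show "min (c powr e) (C powr e) * g k powr e \<le> f k powr e"
      "f k powr e \<le> max (c powr e) (C powr e) * g k powr e"
      using c(1,2) pos[of k] by (simp_all add: powr_mult min_mult_distrib_right max_mult_distrib_right)
    show "0 < g k powr e"
      using pos[of k] by simp
  qed (use c in \<open>simp_all add: less_max_iff_disj\<close>)
qed

lemma comparable_add:
  assumes "f \<asymp> g" "f' \<asymp> g"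
  shows "(\<lambda>k. f k + f' k) \<asymp> g"
proof -
  obtain c C where c: "0 < c" "0 < C" "\<And>k. c * g k \<le> f k" "\<And>k. f k \<le> C * g k"
    using assms(1) by (rule comparableE) blast
  obtain d D where d: "0 < d" "0 < D" "\<And>k. d * g k \<le> f' k" "\<And>k. f' k \<le> D * g k"
    using assms(2) by (rule comparableE) blast
  show ?thesis
  proof (rule comparableI[of _ "c + d" "C + D"])
    fix k
    show "(c + d) * g k \<le> f k + f' k" "f k + f' k \<le> (C + D) * g k"
      using c(3,4)[where k = k] d(3,4)[where k = k] by (simp_all add: algebra_simps)
  qed (use assms c d in \<open>simp_all add: comparable_pos_right\<close>)
qed

lemma sqrt_weighted_mean_bounds:
  fixes a b x y lo hi :: real
  assumes ab: "0 < a" "0 < b" and xy: "0 \<le> lo" "lo \<le> x" "x \<le> hi" "lo \<le> y" "y \<le> hi"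
  shows "lo / 2 \<le> sqrt ((a * x\<^sup>2 + b * y\<^sup>2) / (2 * (a + b)))
    \<and> sqrt ((a * x\<^sup>2 + b * y\<^sup>2) / (2 * (a + b))) \<le> hi"
proof -
  define Q where "Q = (a * x\<^sup>2 + b * y\<^sup>2) / (2 * (a + b))"
  have sq: "lo\<^sup>2 \<le> x\<^sup>2" "lo\<^sup>2 \<le> y\<^sup>2" "x\<^sup>2 \<le> hi\<^sup>2" "y\<^sup>2 \<le> hi\<^sup>2"
    using xy by (auto intro!: power_mono)
  have "(a + b) * lo\<^sup>2 \<le> a * x\<^sup>2 + b * y\<^sup>2" "a * x\<^sup>2 + b * y\<^sup>2 \<le> (a + b) * hi\<^sup>2"
    using add_mono[OF mult_left_mono[OF sq(1)] mult_left_mono[OF sq(2)]]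
      add_mono[OF mult_left_mono[OF sq(3)] mult_left_mono[OF sq(4)]] ab
    by (simp_all add: distrib_right)
  then have "(a + b) * lo\<^sup>2 / (2 * (a + b)) \<le> Q" "Q \<le> (a + b) * hi\<^sup>2 / (2 * (a + b))"
    unfolding Q_def using ab by (simp_all add: divide_right_mono)
  moreover have "s * z / (2 * s) = z / 2" if "0 < s" for s z :: real
    using that by simp
  ultimately have Q: "lo\<^sup>2 / 2 \<le> Q" "Q \<le> hi\<^sup>2 / 2"
    using ab by (simp_all only: add_pos_pos)
  have "(lo / 2)\<^sup>2 = lo\<^sup>2 / 4"
    by (simp add: power_divide)
  then have "(lo / 2)\<^sup>2 \<le> Q"
    using Q(1) zero_le_power2[of lo] by linarith
  then have "lo / 2 \<le> sqrt Q"
    by (rule real_le_rsqrt)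
  moreover have "sqrt Q \<le> hi"
    using Q(2) zero_le_power2[of hi] xy by (intro real_le_lsqrt) linarith+
  ultimately show ?thesis
    unfolding Q_def[symmetric] by (rule conjI)
qed

lemma comparable_quadratic_mean:
  assumes "f \<asymp> g" "f' \<asymp> g" and a: "\<And>k. 0 < a k" and b: "\<And>k. 0 < b k"
  shows "(\<lambda>k. sqrt ((a k * (f k)\<^sup>2 + b k * (f' k)\<^sup>2) / (2 * (a k + b k)))) \<asymp> g"
proof -
  obtain c C where c: "0 < c" "0 < C" "\<And>k. c * g k \<le> f k" "\<And>k. f k \<le> C * g k"
    using assms(1) by (rule comparableE) blast
  obtain d D where d: "0 < d" "0 < D" "\<And>k. d * g k \<le> f' k" "\<And>k. f' k \<le> D * g k"
    using assms(2) by (rule comparableE) blast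
  have pos: "0 < g k" for k
    using assms(1) by (rule comparable_pos_right)
  show ?thesis
  proof (rule comparableI[of _ "min c d / 2" "max C D"])
    fix k
    have "min c d * g k \<le> c * g k" "min c d * g k \<le> d * g k"
      "C * g k \<le> max C D * g k" "D * g k \<le> max C D * g k"
      using pos[of k] by (simp_all add: mult_right_mono)
    then have bounds: "min c d * g k \<le> f k" "f k \<le> max C D * g k"
      "min c d * g k \<le> f' k" "f' k \<le> max C D * g k"
      using c(3,4)[where k = k] d(3,4)[where k = k] by linarith+
    have "0 \<le> min c d * g k"
      using c(1) d(1) pos[of k] by simp
    from sqrt_weighted_mean_bounds[OF a b this bounds]
    show "min c d / 2 * g k \<le> sqrt ((a k * (f k)\<^sup>2 + b k * (f' k)\<^sup>2) / (2 * (a k + b k)))"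
      "sqrt ((a k * (f k)\<^sup>2 + b k * (f' k)\<^sup>2) / (2 * (a k + b k))) \<le> max C D * g k"
      by simp_all
  qed (use pos c d in \<open>simp_all add: less_max_iff_disj\<close>)
qed

lemma comparable_telescope:
  assumes "f \<asymp> (\<lambda>k. H (Suc k) - H k)"
  obtains c C where "0 < c" "0 < C"
    "\<And>j. c * (H j - H 0) \<le> (\<Sum>k<j. f k)" "\<And>j. (\<Sum>k<j. f k) \<le> C * (H j - H 0)"
proof -
  obtain c C where c: "0 < c" "0 < C"
    "\<And>k. c * (H (Suc k) - H k) \<le> f k" "\<And>k. f k \<le> C * (H (Suc k) - H k)"
    using assms by (rule comparableE) blast
  have "c * (H j - H 0) \<le> (\<Sum>k<j. f k)" for j
  proof -
    have "c * (H j - H 0) = (\<Sum>k<j. c * (H (Suc k) - H k))"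
      by (simp add: sum_distrib_left[symmetric] sum_lessThan_telescope)
    also have "\<dots> \<le> (\<Sum>k<j. f k)"
      by (rule sum_mono) (rule c(3))
    finally show ?thesis .
  qed
  moreover have "(\<Sum>k<j. f k) \<le> C * (H j - H 0)" for j
  proof -
    have "(\<Sum>k<j. f k) \<le> (\<Sum>k<j. C * (H (Suc k) - H k))"
      by (rule sum_mono) (rule c(4))
    also have "\<dots> = C * (H j - H 0)"
      by (simp add: sum_distrib_left[symmetric] sum_lessThan_telescope)
    finally show ?thesis .
  qed
  ultimately show ?thesis
    using that c(1,2) by blast
qed

lemma comparable_plog_shift: "(\<lambda>k. plog a b (real (Suc k) + 5)) \<asymp> (\<lambda>k. plog a b (real k + 5))"
proof (rule comparableI[of _ "1 / 2 powr (\<bar>a\<bar> + \<bar>b\<bar>)" "2 powr (\<bar>a\<bar> + \<bar>b\<bar>)"])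
  show "plog a b (real (Suc k) + 5) \<le> 2 powr (\<bar>a\<bar> + \<bar>b\<bar>) * plog a b (real k + 5)" for k
    by (rule plog_le_double) simp_all
  have "plog a b (real k + 5) \<le> 2 powr (\<bar>a\<bar> + \<bar>b\<bar>) * plog a b (real (Suc k) + 5)" for k
    by (rule plog_le_double) simp_all
  then show "1 / 2 powr (\<bar>a\<bar> + \<bar>b\<bar>) * plog a b (real k + 5) \<le> plog a b (real (Suc k) + 5)" for k
    by (simp add: field_simps)
qed (simp_all add: plog_pos)

lemma increment_bounds_plog:
  assumes t: "4 \<le> t"
    and deriv: "\<And>x. t \<le> x \<Longrightarrow> x \<le> t + 1 \<Longrightarrow> (F has_real_derivative F' x) (at x)"
    and bounds: "\<And>x. t \<le> x \<Longrightarrow> x \<le> t + 1 \<Longrightarrow> lo * plog a b x \<le> F' x \<and> F' x \<le> hi * plog a b x"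
    and lo: "0 \<le> lo" and hi: "0 \<le> hi"
  shows "lo / 2 powr (\<bar>a\<bar> + \<bar>b\<bar>) * plog a b t \<le> F (t + 1) - F t
    \<and> F (t + 1) - F t \<le> hi * 2 powr (\<bar>a\<bar> + \<bar>b\<bar>) * plog a b t"
proof -
  define K where "K = 2 powr (\<bar>a\<bar> + \<bar>b\<bar>)"
  have K: "0 < K"
    by (simp add: K_def)
  have "\<exists>\<xi>. t < \<xi> \<and> \<xi> < t + 1 \<and> F (t + 1) - F t = (t + 1 - t) * F' \<xi>"
    by (rule MVT2) (use deriv in simp_all)
  then obtain \<xi> where \<xi>: "t < \<xi>" "\<xi> < t + 1" and mvt: "F (t + 1) - F t = F' \<xi>"
    by auto
  have ratio: "plog a b \<xi> \<le> K * plog a b t" "plog a b t \<le> K * plog a b \<xi>"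
    unfolding K_def using t \<xi> by (auto intro!: plog_le_double)
  have "lo / K * plog a b t \<le> lo / K * (K * plog a b \<xi>)"
    by (rule mult_left_mono[OF ratio(2)]) (use lo K in simp)
  also have "\<dots> = lo * plog a b \<xi>"
    using K by simp
  also have "\<dots> \<le> F' \<xi>"
    using bounds[of \<xi>] \<xi> by simp
  finally have lower: "lo / K * plog a b t \<le> F' \<xi>" .
  have "F' \<xi> \<le> hi * plog a b \<xi>"
    using bounds[of \<xi>] \<xi> by simp
  also have "\<dots> \<le> hi * (K * plog a b t)"
    by (rule mult_left_mono[OF ratio(1)]) (use hi in simp)
  finally show ?thesis
    using lower unfolding mvt K_def by (simp add: mult.assoc)
qed

lemma comparable_increment:
  assumes deriv: "\<And>x. 4 \<le> x \<Longrightarrow> (F has_real_derivative F' x) (at x)"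
    and bounds: "\<And>x. 4 \<le> x \<Longrightarrow> lo * plog a b x \<le> F' x \<and> F' x \<le> hi * plog a b x"
    and lo: "0 < lo"
  shows "(\<lambda>k. F (real (Suc k) + 5) - F (real k + 5)) \<asymp> (\<lambda>k. plog a b (real k + 5))"
proof -
  have "lo * plog a b 4 \<le> hi * plog a b 4"
    using bounds[of 4] by simp
  then have "lo \<le> hi"
    using plog_pos[of 4 a b] by (simp add: mult_le_cancel_right_pos)
  then have hi: "0 < hi"
    using lo by simp
  show ?thesis
  proof (rule comparableI[of _ "lo / 2 powr (\<bar>a\<bar> + \<bar>b\<bar>)" "hi * 2 powr (\<bar>a\<bar> + \<bar>b\<bar>)"])
    fix k
    have "real (Suc k) + 5 = real k + 5 + 1"
      by simp
    then show "lo / 2 powr (\<bar>a\<bar> + \<bar>b\<bar>) * plog a b (real k + 5) \<le> F (real (Suc k) + 5) - F (real k + 5)"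
      "F (real (Suc k) + 5) - F (real k + 5) \<le> hi * 2 powr (\<bar>a\<bar> + \<bar>b\<bar>) * plog a b (real k + 5)"
      using increment_bounds_plog[of "real k + 5" F F' lo a b hi] deriv bounds lo hi by simp_all
  qed (simp_all add: plog_pos lo hi)
qed

lemma comparable_cong:
  "f \<asymp> g \<Longrightarrow> (\<And>k. f k = f' k) \<Longrightarrow> (\<And>k. g k = g' k) \<Longrightarrow> f' \<asymp> g'"
proof -
  assume "f \<asymp> g" "\<And>k. f k = f' k" "\<And>k. g k = g' k"
  then have "f = f'" "g = g'"
    by auto
  with \<open>f \<asymp> g\<close> show "f' \<asymp> g'"
    by simp
qed

lemma comparable_Suc_plog:
  assumes "f \<asymp> (\<lambda>k. plog a b (real k + 5))"
  shows "(\<lambda>k. f (Suc k)) \<asymp> (\<lambda>k. plog a b (real k + 5))"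
proof -
  obtain c C where c: "0 < c" "0 < C" "\<And>k. c * plog a b (real k + 5) \<le> f k"
      "\<And>k. f k \<le> C * plog a b (real k + 5)"
    using assms by (rule comparableE) blast
  have "(\<lambda>k. f (Suc k)) \<asymp> (\<lambda>k. plog a b (real (Suc k) + 5))"
    using c(1,2) c(3,4)[where k = "Suc _"] by (intro comparableI[of _ c C]) (simp_all add: plog_pos)
  then show ?thesis
    using comparable_plog_shift by (rule comparable_trans)
qed

lemma comparable_plog_increment:
  assumes "0 < a" "0 \<le> b"
  shows "(\<lambda>k. plog a b (real (Suc k) + 5) - plog a b (real k + 5)) \<asymp> (\<lambda>k. plog (a - 1) b (real k + 5))"
proof (rule comparable_increment)
  fix x :: real
  assume "4 \<le> x"
  then have x: "1 < x" "exp 1 \<le> x"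
    by (simp_all add: exp_one_le_of_four_le)
  show "(plog a b has_real_derivative plog (a - 1) (b - 1) x * (a * ln x + b)) (at x)"
    using x(1) by (rule plog_has_real_derivative)
  show "a * plog (a - 1) b x \<le> plog (a - 1) (b - 1) x * (a * ln x + b)
      \<and> plog (a - 1) (b - 1) x * (a * ln x + b) \<le> (a + b) * plog (a - 1) b x"
    using plog_derivative_factor_bounds[OF x(2), of a b "a - 1" "b - 1"] assms by simp
qed (rule assms)

lemma comparable_plog_decrement:
  assumes "0 < a" "0 \<le> b"
  shows "(\<lambda>k. plog (- a) (- b) (real k + 5) - plog (- a) (- b) (real (Suc k) + 5))
    \<asymp> (\<lambda>k. plog (- a - 1) (- b) (real k + 5))"
proof -
  have "(\<lambda>k. (\<lambda>x. - plog (- a) (- b) x) (real (Suc k) + 5) - (\<lambda>x. - plog (- a) (- b) x) (real k + 5))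
      \<asymp> (\<lambda>k. plog (- a - 1) (- b) (real k + 5))"
  proof (rule comparable_increment)
    fix x :: real
    assume "4 \<le> x"
    then have x: "1 < x" "exp 1 \<le> x"
      by (simp_all add: exp_one_le_of_four_le)
    have "((\<lambda>x. - plog (- a) (- b) x) has_real_derivative
        - (plog (- a - 1) (- b - 1) x * (- a * ln x + - b))) (at x)"
      using x by (intro DERIV_minus plog_has_real_derivative)
    then show "((\<lambda>x. - plog (- a) (- b) x) has_real_derivative
        plog (- a - 1) (- b - 1) x * (a * ln x + b)) (at x)"
      by (simp add: algebra_simps)
    show "a * plog (- a - 1) (- b) x \<le> plog (- a - 1) (- b - 1) x * (a * ln x + b)
      \<and> plog (- a - 1) (- b - 1) x * (a * ln x + b) \<le> (a + b) * plog (- a - 1) (- b) x"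
      using plog_derivative_factor_bounds[OF x(2), of a b "- a - 1" "- b - 1"] assms by simp
  qed (rule assms)
  then show ?thesis
    by simp
qed

lemma comparable_log_powr_increment:
  assumes "0 < b"
  shows "(\<lambda>k. plog 0 b (real (Suc k) + 5) - plog 0 b (real k + 5)) \<asymp> (\<lambda>k. plog (- 1) (b - 1) (real k + 5))"
proof (rule comparable_increment)
  fix x :: real
  assume "4 \<le> x"
  then have "1 < x"
    by simp
  then show "(plog 0 b has_real_derivative b * plog (- 1) (b - 1) x) (at x)"
    using plog_has_real_derivative[of x 0 b] by (simp add: mult.commute)
qed (use assms in auto)

section \<open>The tree\<close>

lemma Nil_in_tree_V: "[] \<in> tree_V N"
  unfolding tree_V_def by auto

lemma butlast_in_tree_V: "x \<in> tree_V N \<Longrightarrow> butlast x \<in> tree_V N"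
  unfolding tree_V_def by (auto simp: nth_butlast dest: in_set_butlastD)

lemma tree_V_lists: "tree_V N \<subseteq> {xs. set xs \<subseteq> {..<N}}"
  unfolding tree_V_def by auto

lemma snoc_in_tree_V_iff:
  assumes x: "x \<in> tree_V N"
  shows "x @ [a] \<in> tree_V N \<longleftrightarrow> a < N \<and> (x \<noteq> [] \<longrightarrow> a \<noteq> last x)"
proof
  assume xa: "x @ [a] \<in> tree_V N"
  have "a \<noteq> last x" if "x \<noteq> []"
  proof -
    have "Suc (length x - 1) < length (x @ [a])"
      using that by simp
    then have "(x @ [a]) ! (length x - 1) \<noteq> (x @ [a]) ! Suc (length x - 1)"
      using xa unfolding tree_V_def by blast
    with that show ?thesis
      by (simp add: nth_append last_conv_nth)
  qed
  with xa show "a < N \<and> (x \<noteq> [] \<longrightarrow> a \<noteq> last x)"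
    unfolding tree_V_def by auto
next
  assume a: "a < N \<and> (x \<noteq> [] \<longrightarrow> a \<noteq> last x)"
  have "(x @ [a]) ! i \<noteq> (x @ [a]) ! Suc i" if "Suc i < length (x @ [a])" for i
  proof (cases "Suc i < length x")
    case True
    then show ?thesis
      using x unfolding tree_V_def by (simp add: nth_append)
  next
    case False
    then have "x \<noteq> []" "i = length x - 1"
      using that by auto
    then show ?thesis
      using a by (simp add: nth_append last_conv_nth)
  qed
  then show "x @ [a] \<in> tree_V N"
    using x a unfolding tree_V_def by auto
qed

lemma tree_adj_sym: "tree_adj N x y \<Longrightarrow> tree_adj N y x"
  unfolding tree_adj_def by auto

lemma tree_adj_cases:
  assumes "tree_adj N x y"
  obtains "x \<noteq> []" "y = butlast x" | "y \<noteq> []" "x = butlast y"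
  using assms unfolding tree_adj_def by auto

lemma tree_adj_butlast: "x \<in> tree_V N \<Longrightarrow> x \<noteq> [] \<Longrightarrow> tree_adj N (butlast x) x"
  unfolding tree_adj_def by (metis append_butlast_last_id butlast_in_tree_V)

definition child_letters :: "nat \<Rightarrow> nat list \<Rightarrow> nat set" where
  "child_letters N x = {a. a < N \<and> (x \<noteq> [] \<longrightarrow> a \<noteq> last x)}"

lemma finite_child_letters: "finite (child_letters N x)"
  unfolding child_letters_def by auto

lemma card_child_letters:
  assumes "x \<in> tree_V N"
  shows "card (child_letters N x) = (if x = [] then N else N - 1)"
proof (cases "x = []")
  case False
  then have "child_letters N x = {..<N} - {last x}" "last x < N"
    using assms unfolding child_letters_def tree_V_def by auto
  then show ?thesis
    using False by simp
qed (simp add: child_letters_def)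

lemma snoc_in_tree_V: "x \<in> tree_V N \<Longrightarrow> a \<in> child_letters N x \<Longrightarrow> x @ [a] \<in> tree_V N"
  by (simp add: snoc_in_tree_V_iff child_letters_def)

lemma nbrs_tree:
  assumes x: "x \<in> tree_V N"
  shows "nbrs (tree_V N) (tree_adj N) x =
    (if x = [] then {} else {butlast x}) \<union> (\<lambda>a. x @ [a]) ` child_letters N x"
proof (intro set_eqI iffI)
  fix y
  assume "y \<in> nbrs (tree_V N) (tree_adj N) x"
  then have y: "y \<in> tree_V N" and xy: "tree_adj N x y"
    unfolding nbrs_def by auto
  from xy show "y \<in> (if x = [] then {} else {butlast x}) \<union> (\<lambda>a. x @ [a]) ` child_letters N x"
  proof (cases rule: tree_adj_cases)
    case 2
    then have "y = x @ [last y]"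
      by simp
    moreover have "last y \<in> child_letters N x"
      using y x calculation snoc_in_tree_V_iff[OF x, of "last y"] by (simp add: child_letters_def)
    ultimately show ?thesis
      by blast
  qed simp
next
  fix y
  assume "y \<in> (if x = [] then {} else {butlast x}) \<union> (\<lambda>a. x @ [a]) ` child_letters N x"
  then consider "x \<noteq> []" "y = butlast x" | a where "a \<in> child_letters N x" "y = x @ [a]"
    by (auto split: if_splits)
  then show "y \<in> nbrs (tree_V N) (tree_adj N) x"
  proof cases
    case 1
    then show ?thesis
      using x tree_adj_butlast[OF x] butlast_in_tree_V[OF x]
      by (simp add: nbrs_def tree_adj_sym)
  next
    case 2
    then show ?thesis
      using x snoc_in_tree_V[OF x] by (simp add: nbrs_def tree_adj_def)
  qed
qed

lemma finite_nbrs_tree: "x \<in> tree_V N \<Longrightarrow> finite (nbrs (tree_V N) (tree_adj N) x)"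
  by (simp add: nbrs_tree finite_child_letters)

lemma sum_nbrs_tree:
  assumes x: "x \<in> tree_V N"
  shows "(\<Sum>y\<in>nbrs (tree_V N) (tree_adj N) x. F y) =
     (if x = [] then 0 else F (butlast x)) + (\<Sum>a\<in>child_letters N x. F (x @ [a]))"
proof -
  have children: "(\<Sum>y\<in>(\<lambda>a. x @ [a]) ` child_letters N x. F y) = (\<Sum>a\<in>child_letters N x. F (x @ [a]))"
    by (rule sum.reindex_cong[of "\<lambda>a. x @ [a]"]) (auto simp: inj_on_def)
  show ?thesis
  proof (cases "x = []")
    case True
    then show ?thesis
      unfolding nbrs_tree[OF x] using children by simp
  next
    case False
    have "butlast x \<notin> (\<lambda>a. x @ [a]) ` child_letters N x"
      by (auto dest: arg_cong[of _ _ length])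
    then show ?thesis
      using False children by (simp add: nbrs_tree[OF x] finite_child_letters)
  qed
qed

lemma gdist_le: "(R ^^ n) x y \<Longrightarrow> gdist R x y \<le> n"
  unfolding gdist_def by (rule Least_le)

lemma gdist_self: "gdist R x x = 0"
  using gdist_le[where R = R and n = 0] by simp

lemma relpowp_tree_adj_length:
  "(tree_adj N ^^ n) x y \<Longrightarrow>
     length y \<le> length x + n \<and> length x \<le> length y + n \<and> even (n + length x + length y)"
proof (induction n arbitrary: y)
  case (Suc n)
  from Suc.prems obtain z where z: "(tree_adj N ^^ n) x z" and zy: "tree_adj N z y"
    by (rule relpowp_Suc_E)
  from zy Suc.IH[OF z] show ?case
    by (cases rule: tree_adj_cases) auto
qed simp

lemma relpowp_tree_adj_Nil:
  "x \<in> tree_V N \<Longrightarrow> (tree_adj N ^^ length x) [] x \<and> (tree_adj N ^^ length x) x []"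
proof (induction x rule: rev_induct)
  case (snoc a x)
  have x: "x \<in> tree_V N"
    using butlast_in_tree_V[OF snoc.prems] by simp
  have step: "tree_adj N x (x @ [a])"
    using tree_adj_butlast[OF snoc.prems] by simp
  have "(tree_adj N ^^ Suc (length x)) [] (x @ [a])"
    using relpowp_Suc_I[OF conjunct1[OF snoc.IH[OF x]] step] .
  moreover have "(tree_adj N ^^ Suc (length x)) (x @ [a]) []"
    using relpowp_Suc_I2[where P = "tree_adj N", OF tree_adj_sym[OF step]] snoc.IH[OF x] by blast
  ultimately show ?case
    by simp
qed simp

lemma gdist_tree_walk:
  assumes "x \<in> tree_V N" "y \<in> tree_V N"
  shows "(tree_adj N ^^ gdist (tree_adj N) x y) x y"
  unfolding gdist_def
proof (rule LeastI)
  show "(tree_adj N ^^ (length x + length y)) x y"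
    using relpowp_tree_adj_Nil[OF assms(1)] relpowp_tree_adj_Nil[OF assms(2)]
    by (auto simp: relpowp_add)
qed

lemma gdist_tree_length:
  assumes "r \<in> tree_V N" "x \<in> tree_V N"
  shows "length x \<le> length r + gdist (tree_adj N) r x \<and> gdist (tree_adj N) r x \<le> length r + length x"
proof -
  have "(tree_adj N ^^ (length r + length x)) r x"
    using relpowp_tree_adj_Nil[OF assms(1)] relpowp_tree_adj_Nil[OF assms(2)]
    by (auto simp: relpowp_add)
  then show ?thesis
    using relpowp_tree_adj_length[OF gdist_tree_walk[OF assms]] gdist_le by fastforce
qed

lemma gdist_tree_adj_le:
  assumes "r \<in> tree_V N" "x \<in> tree_V N" "tree_adj N x y"
  shows "gdist (tree_adj N) r y \<le> gdist (tree_adj N) r x + 1"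
  using gdist_le[OF relpowp_Suc_I[OF gdist_tree_walk[OF assms(1,2)] assms(3)]] by simp

lemma gdist_tree_adj_neq:
  assumes r: "r \<in> tree_V N" and xy: "tree_adj N x y"
  shows "gdist (tree_adj N) r x \<noteq> gdist (tree_adj N) r y"
proof
  assume eq: "gdist (tree_adj N) r x = gdist (tree_adj N) r y"
  have x: "x \<in> tree_V N" and y: "y \<in> tree_V N"
    using xy unfolding tree_adj_def by auto
  have "even (gdist (tree_adj N) r x + length r + length x)"
    using relpowp_tree_adj_length[OF gdist_tree_walk[OF r x]] by (rule conjunct2[OF conjunct2])
  moreover have "even (gdist (tree_adj N) r x + length r + length y)"
    using relpowp_tree_adj_length[OF gdist_tree_walk[OF r y]] eq by simp
  moreover have "length x = Suc (length y) \<or> length y = Suc (length x)"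
    using xy by (cases rule: tree_adj_cases) auto
  ultimately show False
    by presburger
qed

definition level :: "nat \<Rightarrow> nat \<Rightarrow> nat list set" where
  "level N k = {x \<in> tree_V N. length x = k}"

lemma finite_level: "finite (level N k)"
  by (rule finite_subset[OF _ finite_lists_length_eq[of "{..<N}" k]])
    (auto simp: level_def tree_V_def)

lemma card_level_Suc: "card (level N (Suc k)) = N * (N - 1) ^ k"
proof (induction k)
  case 0
  have "level N 1 = (\<lambda>a. [a]) ` {..<N}"
    using snoc_in_tree_V_iff[OF Nil_in_tree_V]
    by (force simp: level_def tree_V_def length_Suc_conv)
  then show ?case
    by (simp add: card_image inj_on_def)
next
  case (Suc k)
  have level_eq: "level N (Suc (Suc k)) = (\<lambda>(x, a). x @ [a]) ` (SIGMA x:level N (Suc k). child_letters N x)"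
  proof (intro set_eqI iffI)
    fix z
    assume z: "z \<in> level N (Suc (Suc k))"
    then have "z \<noteq> []" "z \<in> tree_V N"
      by (auto simp: level_def)
    then have "z = butlast z @ [last z]" "z \<in> tree_V N"
      by simp_all
    moreover have "butlast z \<in> level N (Suc k)"
      using z butlast_in_tree_V by (auto simp: level_def)
    moreover have "last z \<in> child_letters N (butlast z)"
      using calculation snoc_in_tree_V_iff[of "butlast z" N "last z"]
      by (auto simp: child_letters_def level_def)
    ultimately show "z \<in> (\<lambda>(x, a). x @ [a]) ` (SIGMA x:level N (Suc k). child_letters N x)"
      by force
  qed (auto simp: level_def snoc_in_tree_V)
  have "card (level N (Suc (Suc k))) = card (SIGMA x:level N (Suc k). child_letters N x)"
    unfolding level_eq by (rule card_image) (auto simp: inj_on_def)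
  also have "\<dots> = (\<Sum>x\<in>level N (Suc k). card (child_letters N x))"
    by (rule card_SigmaI[OF finite_level]) (simp add: finite_child_letters)
  also have "\<dots> = (\<Sum>x\<in>level N (Suc k). N - 1)"
    by (rule sum.cong) (auto simp: card_child_letters level_def)
  finally show ?case
    using Suc.IH by simp
qed

section \<open>Radial weights and radial functions\<close>

definition level_weight :: "nat \<Rightarrow> (nat \<Rightarrow> real) \<Rightarrow> nat list \<Rightarrow> nat list \<Rightarrow> real" where
  "level_weight N w x y = (if tree_adj N x y
     then w (min (length x) (length y)) / (real N * real (N - 1) ^ min (length x) (length y))
     else 0)"

lemma is_weight_level_weight:
  assumes "2 \<le> N" "\<And>k. 0 < w k"
  shows "is_weight (tree_V N) (tree_adj N) (level_weight N w)"
proof -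
  have "tree_adj N x y \<longleftrightarrow> tree_adj N y x" for x y
    using tree_adj_sym by blast
  then show ?thesis
    unfolding is_weight_def level_weight_def
    using assms by (auto simp: min.commute intro!: divide_nonneg_pos less_imp_le)
qed

lemma level_weight_nonneg: "(\<And>k. 0 \<le> w k) \<Longrightarrow> 0 \<le> level_weight N w x y"
  by (simp add: level_weight_def)

text \<open>An edge leaving the ball is determined by its endpoint farther from the empty word.
  These endpoints fill the levels 1 to n - |r| and stay within the levels 1 to n + 1 + |r|,
  since the length of a word and its distance from r differ by at most |r|.\<close>

definition outer_end :: "nat list \<times> nat list \<Rightarrow> nat list" where
  "outer_end = (\<lambda>(x, y). if length x < length y then y else x)"

lemma level_weight_outer_end:
  assumes "tree_adj N x y"
  shows "level_weight N w x y =
    w (length (outer_end (x, y)) - 1) / (real N * real (N - 1) ^ (length (outer_end (x, y)) - 1))"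
proof -
  have "min (length x) (length y) = length (outer_end (x, y)) - 1"
    using assms by (cases rule: tree_adj_cases) (auto simp: outer_end_def)
  then show ?thesis
    using assms by (simp add: level_weight_def)
qed

definition outward_edges :: "nat \<Rightarrow> nat list \<Rightarrow> nat \<Rightarrow> (nat list \<times> nat list) set" where
  "outward_edges N r n = (SIGMA x:ball (tree_V N) (tree_adj N) r n.
     {y \<in> nbrs (tree_V N) (tree_adj N) x. gdist (tree_adj N) r x < gdist (tree_adj N) r y})"

lemma finite_ball_tree:
  assumes "r \<in> tree_V N"
  shows "finite (ball (tree_V N) (tree_adj N) r n)"
proof (rule finite_subset)
  show "ball (tree_V N) (tree_adj N) r n \<subseteq> {xs. set xs \<subseteq> {..<N} \<and> length xs \<le> length r + n}"
    using gdist_tree_length[OF assms] tree_V_lists by (fastforce simp: ball_def)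
qed (rule finite_lists_length_le, simp)

lemma finite_outward_edges: "r \<in> tree_V N \<Longrightarrow> finite (outward_edges N r n)"
  unfolding outward_edges_def using finite_ball_tree
  by (intro finite_SigmaI) (auto simp: ball_def nbrs_def intro: finite_subset[OF _ finite_nbrs_tree])

lemma W_o_eq_sum_outward_edges:
  assumes "r \<in> tree_V N"
  shows "W_o (tree_V N) (tree_adj N) \<mu> r n = (\<Sum>(x, y)\<in>outward_edges N r n. \<mu> x y)"
  unfolding W_o_def outward_edges_def
  by (rule sum.Sigma) (use finite_ball_tree[OF assms] in
      \<open>auto simp: ball_def nbrs_def intro: finite_subset[OF _ finite_nbrs_tree]\<close>)

lemma outward_edge_adj: "(x, y) \<in> outward_edges N r n \<Longrightarrow> tree_adj N x y"
  by (simp add: outward_edges_def nbrs_def)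

lemma tree_adj_outer_end:
  assumes "tree_adj N x y"
  shows "(outer_end (x, y) = y \<and> x = butlast y) \<or> (outer_end (x, y) = x \<and> y = butlast x)"
  using assms by (cases rule: tree_adj_cases) (auto simp: outer_end_def)

lemma inj_on_outer_end: "inj_on outer_end (outward_edges N r n)"
proof (rule inj_onI)
  fix e e'
  assume e: "e \<in> outward_edges N r n" and e': "e' \<in> outward_edges N r n"
    and eq: "outer_end e = outer_end e'"
  obtain x y x' y' where xy: "e = (x, y)" and xy': "e' = (x', y')"
    by (cases e, cases e')
  have "gdist (tree_adj N) r x < gdist (tree_adj N) r y" "gdist (tree_adj N) r x' < gdist (tree_adj N) r y'"
    using e e' xy xy' by (auto simp: outward_edges_def)
  moreover have "(outer_end (x, y) = y \<and> x = butlast y) \<or> (outer_end (x, y) = x \<and> y = butlast x)"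
    "(outer_end (x', y') = y' \<and> x' = butlast y') \<or> (outer_end (x', y') = x' \<and> y' = butlast x')"
    using e e' xy xy' by (auto intro!: tree_adj_outer_end dest: outward_edge_adj)
  ultimately show "e = e'"
    using eq unfolding xy xy' by auto
qed

lemma mem_levels: "z \<in> (\<Union>k<j. level N (Suc k)) \<longleftrightarrow> z \<in> tree_V N \<and> z \<noteq> [] \<and> length z \<le> j"
  by (cases z) (auto simp: level_def)

lemma outer_end_outward_edges_subset:
  assumes r: "r \<in> tree_V N"
  shows "outer_end ` outward_edges N r n \<subseteq> (\<Union>k<n + 1 + length r. level N (Suc k))"
proof
  fix z
  assume "z \<in> outer_end ` outward_edges N r n"
  then obtain x y where e: "(x, y) \<in> outward_edges N r n" and z: "z = outer_end (x, y)"
    by auto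
  have xy: "tree_adj N x y"
    using e by (rule outward_edge_adj)
  have x: "x \<in> tree_V N" and y: "y \<in> tree_V N"
    using xy unfolding tree_adj_def by auto
  have dx: "gdist (tree_adj N) r x \<le> n"
    using e by (auto simp: outward_edges_def ball_def)
  have dy: "gdist (tree_adj N) r y \<le> n + 1"
    using gdist_tree_adj_le[OF r x xy] dx by simp
  from xy show "z \<in> (\<Union>k<n + 1 + length r. level N (Suc k))"
    using gdist_tree_length[OF r x] gdist_tree_length[OF r y] dx dy x y
    unfolding z outer_end_def mem_levels by (cases rule: tree_adj_cases) auto
qed

lemma outer_end_outward_edges_superset:
  assumes r: "r \<in> tree_V N"
  shows "(\<Union>k<n - length r. level N (Suc k)) \<subseteq> outer_end ` outward_edges N r n"
proof
  fix z
  assume "z \<in> (\<Union>k<n - length r. level N (Suc k))"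
  then have z: "z \<in> tree_V N" "z \<noteq> []" and "length z \<le> n - length r"
    unfolding mem_levels by auto
  then have len: "length z + length r \<le> n"
    by (cases z) auto
  have p: "butlast z \<in> tree_V N"
    using z(1) by (rule butlast_in_tree_V)
  have adj: "tree_adj N (butlast z) z" "tree_adj N z (butlast z)"
    using tree_adj_butlast[OF z] by (auto intro: tree_adj_sym)
  have "gdist (tree_adj N) r z \<le> n" "gdist (tree_adj N) r (butlast z) \<le> n"
    using gdist_tree_length[OF r z(1)] gdist_tree_length[OF r p] len by auto
  moreover have "gdist (tree_adj N) r (butlast z) \<noteq> gdist (tree_adj N) r z"
    using gdist_tree_adj_neq[OF r adj(1)] .
  ultimately have "(butlast z, z) \<in> outward_edges N r n \<or> (z, butlast z) \<in> outward_edges N r n"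
    using adj z p by (auto simp: outward_edges_def ball_def nbrs_def)
  moreover have "outer_end (butlast z, z) = z" "outer_end (z, butlast z) = z"
    using z by (auto simp: outer_end_def)
  ultimately show "z \<in> outer_end ` outward_edges N r n"
    by (metis image_eqI)
qed

lemma sum_levels:
  "(\<Sum>z\<in>(\<Union>k<j. level N (Suc k)). F (length z)) = (\<Sum>k<j. real (card (level N (Suc k))) * F (Suc k))"
proof -
  have "(\<Sum>z\<in>(\<Union>k<j. level N (Suc k)). F (length z)) = (\<Sum>k<j. \<Sum>z\<in>level N (Suc k). F (length z))"
    using finite_level[of N, unfolded level_def] by (intro sum.UNION_disjoint) (auto simp: level_def)
  also have "\<dots> = (\<Sum>k<j. real (card (level N (Suc k))) * F (Suc k))"
    by (rule sum.cong) (auto simp: level_def)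
  finally show ?thesis .
qed

lemma sum_level_weights_levels:
  assumes "2 \<le> N"
  shows "(\<Sum>z\<in>(\<Union>k<j. level N (Suc k)). w (length z - 1) / (real N * real (N - 1) ^ (length z - 1)))
    = (\<Sum>k<j. w k)"
  using sum_levels[of "\<lambda>l. w (l - 1) / (real N * real (N - 1) ^ (l - 1))" N j] assms
  by (simp add: card_level_Suc)

lemma W_o_level_weight_bounds:
  assumes N: "2 \<le> N" and r: "r \<in> tree_V N" and w: "\<And>k. 0 \<le> w k"
  shows "(\<Sum>k<n - length r. w k) \<le> W_o (tree_V N) (tree_adj N) (level_weight N w) r n
    \<and> W_o (tree_V N) (tree_adj N) (level_weight N w) r n \<le> (\<Sum>k<n + 1 + length r. w k)"
proof -
  define \<rho> where "\<rho> z = w (length z - 1) / (real N * real (N - 1) ^ (length z - 1))" for z :: "nat list"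
  have \<rho>: "0 \<le> \<rho> z" for z
    using w N by (simp add: \<rho>_def)
  have "W_o (tree_V N) (tree_adj N) (level_weight N w) r n = (\<Sum>e\<in>outward_edges N r n. \<rho> (outer_end e))"
    unfolding W_o_eq_sum_outward_edges[OF r]
    by (rule sum.cong) (auto simp: \<rho>_def level_weight_outer_end dest: outward_edge_adj)
  also have "\<dots> = (\<Sum>z\<in>outer_end ` outward_edges N r n. \<rho> z)"
    by (rule sum.reindex[OF inj_on_outer_end, symmetric, unfolded comp_def])
  finally have W: "W_o (tree_V N) (tree_adj N) (level_weight N w) r n = (\<Sum>z\<in>outer_end ` outward_edges N r n. \<rho> z)" .
  have "(\<Sum>k<n - length r. w k) = (\<Sum>z\<in>(\<Union>k<n - length r. level N (Suc k)). \<rho> z)"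
    unfolding \<rho>_def using sum_level_weights_levels[OF N] by simp
  also have "\<dots> \<le> (\<Sum>z\<in>outer_end ` outward_edges N r n. \<rho> z)"
    using outer_end_outward_edges_superset[OF r, of n] finite_outward_edges[OF r, of n]
    by (intro sum_mono2) (auto simp: \<rho>)
  finally have lower: "(\<Sum>k<n - length r. w k) \<le> W_o (tree_V N) (tree_adj N) (level_weight N w) r n"
    unfolding W .
  have "(\<Sum>z\<in>outer_end ` outward_edges N r n. \<rho> z) \<le> (\<Sum>z\<in>(\<Union>k<n + 1 + length r. level N (Suc k)). \<rho> z)"
    using outer_end_outward_edges_subset[OF r, of n] by (intro sum_mono2) (auto simp: \<rho> finite_level)
  also have "\<dots> = (\<Sum>k<n + 1 + length r. w k)"
    unfolding \<rho>_def by (rule sum_level_weights_levels[OF N])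
  finally show ?thesis
    using lower unfolding W by simp
qed

lemma W_o_level_weight_pos:
  assumes N: "2 \<le> N" and r: "r \<in> tree_V N" and w: "\<And>k. 0 < w k"
  obtains W\<^sub>0 where "0 < W\<^sub>0" "\<And>n. W\<^sub>0 \<le> W_o (tree_V N) (tree_adj N) (level_weight N w) r n"
proof -
  have "card (child_letters N r) \<noteq> 0"
    using card_child_letters[OF r] N by simp
  then have "child_letters N r \<noteq> {}"
    by (metis card.empty)
  then obtain a where a: "a \<in> child_letters N r"
    by blast
  define y where "y = r @ [a]"
  have y: "y \<in> tree_V N" and ry: "tree_adj N r y"
    using snoc_in_tree_V[OF r a] tree_adj_butlast[of y N] by (simp_all add: y_def)
  have edge: "(r, y) \<in> outward_edges N r n" for n
    using r y ry gdist_self[of "tree_adj N" r] gdist_tree_adj_neq[OF r ry]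
    by (auto simp: outward_edges_def ball_def nbrs_def)
  have "level_weight N w r y \<le> W_o (tree_V N) (tree_adj N) (level_weight N w) r n" for n
  proof -
    have "level_weight N w r y = (\<lambda>(x, y). level_weight N w x y) (r, y)"
      by simp
    also have "\<dots> \<le> (\<Sum>(x, y)\<in>outward_edges N r n. level_weight N w x y)"
      by (rule member_le_sum[OF edge])
        (use level_weight_nonneg w finite_outward_edges[OF r] in \<open>auto simp: less_imp_le\<close>)
    finally show ?thesis
      unfolding W_o_eq_sum_outward_edges[OF r] .
  qed
  moreover have "0 < level_weight N w r y"
    using ry w N by (simp add: level_weight_def)
  ultimately show ?thesis
    using that by blast
qed

lemma level_weight_child:
  assumes "x \<in> tree_V N" "a \<in> child_letters N x"
  shows "level_weight N w x (x @ [a]) = w (length x) / (real N * real (N - 1) ^ length x)"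
  using snoc_in_tree_V[OF assms] tree_adj_butlast[of "x @ [a]" N] by (simp add: level_weight_def)

lemma level_weight_parent:
  assumes "x \<in> tree_V N" "x \<noteq> []"
  shows "level_weight N w x (butlast x) = w (length x - 1) / (real N * real (N - 1) ^ (length x - 1))"
proof -
  have "min (length x) (length (butlast x)) = length x - 1"
    by simp
  then show ?thesis
    using tree_adj_sym[OF tree_adj_butlast[OF assms]] by (simp add: level_weight_def)
qed

lemma sum_nbrs_level_weight_Nil:
  assumes "2 \<le> N"
  shows "(\<Sum>y\<in>nbrs (tree_V N) (tree_adj N) []. level_weight N w [] y * h (length y)) = w 0 * h 1"
proof -
  have "(\<Sum>y\<in>nbrs (tree_V N) (tree_adj N) []. level_weight N w [] y * h (length y))
      = (\<Sum>a\<in>child_letters N []. level_weight N w [] [a] * h 1)"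
    by (simp add: sum_nbrs_tree[OF Nil_in_tree_V])
  also have "\<dots> = (\<Sum>a\<in>child_letters N []. w 0 / real N * h 1)"
    by (rule sum.cong[OF refl]) (simp add: level_weight_child[OF Nil_in_tree_V, of _ N w, simplified])
  also have "\<dots> = w 0 * h 1"
    using assms card_child_letters[OF Nil_in_tree_V, of N] by simp
  finally show ?thesis .
qed

lemma sum_nbrs_level_weight_Suc:
  assumes N: "2 \<le> N" and x: "x \<in> tree_V N" and k: "length x = Suc k"
  shows "(\<Sum>y\<in>nbrs (tree_V N) (tree_adj N) x. level_weight N w x y * h (length y))
    = (w k * h k + w (Suc k) * h (Suc (Suc k))) / (real N * real (N - 1) ^ k)"
proof -
  have x0: "x \<noteq> []"
    using k by auto
  have "(\<Sum>a\<in>child_letters N x. level_weight N w x (x @ [a]) * h (length (x @ [a])))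
      = (\<Sum>a\<in>child_letters N x. w (Suc k) / (real N * real (N - 1) ^ Suc k) * h (Suc (Suc k)))"
    by (auto intro!: sum.cong simp: level_weight_child[OF x] k)
  also have "\<dots> = real (N - 1) * (w (Suc k) / (real N * real (N - 1) ^ Suc k) * h (Suc (Suc k)))"
    using card_child_letters[OF x] x0 by simp
  also have "\<dots> = w (Suc k) * h (Suc (Suc k)) / (real N * real (N - 1) ^ k)"
    using N by (simp add: field_simps)
  finally show ?thesis
    unfolding sum_nbrs_tree[OF x] using x0
    by (simp add: level_weight_parent[OF x x0] k add_divide_distrib)
qed

lemma level_weight_radial_Nil:
  assumes "2 \<le> N" "0 < w 0"
  shows "mlap (tree_V N) (tree_adj N) (level_weight N w) m (\<lambda>y. v (length y)) []
      = \<bar>v 1 - v 0\<bar> powr (m - 2) * (v 1 - v 0)"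
    and "gradn (tree_V N) (tree_adj N) (level_weight N w) (\<lambda>y. v (length y)) [] = \<bar>v 1 - v 0\<bar> / sqrt 2"
proof -
  have vmeas: "vmeas (tree_V N) (tree_adj N) (level_weight N w) [] = w 0"
    using sum_nbrs_level_weight_Nil[OF assms(1), of w "\<lambda>_. 1"] by (simp add: vmeas_def)
  show "mlap (tree_V N) (tree_adj N) (level_weight N w) m (\<lambda>y. v (length y)) []
      = \<bar>v 1 - v 0\<bar> powr (m - 2) * (v 1 - v 0)"
    using sum_nbrs_level_weight_Nil[OF assms(1), of w "\<lambda>l. \<bar>v l - v 0\<bar> powr (m - 2) * (v l - v 0)"] assms(2)
    by (simp add: mlap_def vmeas mult.assoc)
  have "gradn (tree_V N) (tree_adj N) (level_weight N w) (\<lambda>y. v (length y)) []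
      = sqrt ((\<Sum>y\<in>nbrs (tree_V N) (tree_adj N) []. level_weight N w [] y * (v (length y) - v 0)\<^sup>2) / (2 * w 0))"
    by (simp add: gradn_def vmeas sum_divide_distrib)
  also have "\<dots> = sqrt ((v 1 - v 0)\<^sup>2 / 2)"
    using sum_nbrs_level_weight_Nil[OF assms(1), of w "\<lambda>l. (v l - v 0)\<^sup>2"] assms(2) by simp
  finally show "gradn (tree_V N) (tree_adj N) (level_weight N w) (\<lambda>y. v (length y)) [] = \<bar>v 1 - v 0\<bar> / sqrt 2"
    by (simp add: real_sqrt_divide)
qed

lemma level_weight_radial_Suc:
  assumes N: "2 \<le> N" and x: "x \<in> tree_V N" and k: "length x = Suc k" and w: "0 < w k" "0 < w (Suc k)"
  shows "mlap (tree_V N) (tree_adj N) (level_weight N w) m (\<lambda>y. v (length y)) x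
      = (w k * (\<bar>v k - v (Suc k)\<bar> powr (m - 2) * (v k - v (Suc k)))
         + w (Suc k) * (\<bar>v (Suc (Suc k)) - v (Suc k)\<bar> powr (m - 2) * (v (Suc (Suc k)) - v (Suc k))))
        / (w k + w (Suc k))"
    and "gradn (tree_V N) (tree_adj N) (level_weight N w) (\<lambda>y. v (length y)) x
      = sqrt ((w k * (v k - v (Suc k))\<^sup>2 + w (Suc k) * (v (Suc (Suc k)) - v (Suc k))\<^sup>2)
          / (2 * (w k + w (Suc k))))"
proof -
  define s where "s = real N * real (N - 1) ^ k"
  have s: "0 < s"
    using N by (simp add: s_def)
  have sum: "(\<Sum>y\<in>nbrs (tree_V N) (tree_adj N) x. level_weight N w x y * h (length y))
      = (w k * h k + w (Suc k) * h (Suc (Suc k))) / s" for h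
    unfolding s_def by (rule sum_nbrs_level_weight_Suc[OF N x k])
  have vmeas: "vmeas (tree_V N) (tree_adj N) (level_weight N w) x = (w k + w (Suc k)) / s"
    using sum[of "\<lambda>_. 1"] by (simp add: vmeas_def)
  have W: "0 < w k + w (Suc k)"
    using w by simp
  have "(\<Sum>y\<in>nbrs (tree_V N) (tree_adj N) x.
        level_weight N w x y * \<bar>v (length y) - v (Suc k)\<bar> powr (m - 2) * (v (length y) - v (Suc k)))
      = (w k * (\<bar>v k - v (Suc k)\<bar> powr (m - 2) * (v k - v (Suc k)))
         + w (Suc k) * (\<bar>v (Suc (Suc k)) - v (Suc k)\<bar> powr (m - 2) * (v (Suc (Suc k)) - v (Suc k)))) / s"
    using sum[of "\<lambda>l. \<bar>v l - v (Suc k)\<bar> powr (m - 2) * (v l - v (Suc k))"] by (simp add: mult.assoc)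
  then show "mlap (tree_V N) (tree_adj N) (level_weight N w) m (\<lambda>y. v (length y)) x
      = (w k * (\<bar>v k - v (Suc k)\<bar> powr (m - 2) * (v k - v (Suc k)))
         + w (Suc k) * (\<bar>v (Suc (Suc k)) - v (Suc k)\<bar> powr (m - 2) * (v (Suc (Suc k)) - v (Suc k))))
        / (w k + w (Suc k))"
    unfolding mlap_def vmeas k using s by simp
  have "gradn (tree_V N) (tree_adj N) (level_weight N w) (\<lambda>y. v (length y)) x
      = sqrt ((\<Sum>y\<in>nbrs (tree_V N) (tree_adj N) x. level_weight N w x y * (v (length y) - v (Suc k))\<^sup>2)
          / (2 * ((w k + w (Suc k)) / s)))"
    unfolding gradn_def vmeas[symmetric] by (simp add: sum_divide_distrib k)
  also have "\<dots> = sqrt ((w k * (v k - v (Suc k))\<^sup>2 + w (Suc k) * (v (Suc (Suc k)) - v (Suc k))\<^sup>2)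
          / (2 * (w k + w (Suc k))))"
    using sum[of "\<lambda>l. (v l - v (Suc k))\<^sup>2"] s by simp
  finally show "gradn (tree_V N) (tree_adj N) (level_weight N w) (\<lambda>y. v (length y)) x
      = sqrt ((w k * (v k - v (Suc k))\<^sup>2 + w (Suc k) * (v (Suc (Suc k)) - v (Suc k))\<^sup>2)
          / (2 * (w k + w (Suc k))))" .
qed

section \<open>The construction\<close>

lemma abs_powr_mult_self_pos: "0 < (s::real) \<Longrightarrow> \<bar>s\<bar> powr (m - 2) * s = s powr (m - 1)"
  using powr_add[of s "m - 2" 1] by simp

lemma abs_powr_mult_self_neg: "0 < (s::real) \<Longrightarrow> \<bar>- s\<bar> powr (m - 2) * (- s) = - (s powr (m - 1))"
  using abs_powr_mult_self_pos[of s m] by simp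

lemma powr_scaling_absorbs:
  fixes \<kappa> K X A :: real
  assumes "0 < \<kappa>" "0 < K" "X \<le> K * A" "0 \<le> A"
  shows "(K powr (- 1 / \<kappa>)) powr \<kappa> * X \<le> A"
proof -
  have "(K powr (- 1 / \<kappa>)) powr \<kappa> = K powr (- 1)"
    using assms(1) unfolding powr_powr by simp
  then have "(K powr (- 1 / \<kappa>)) powr \<kappa> = 1 / K"
    using assms(2) by (simp add: powr_minus_divide)
  then show ?thesis
    using assms(2,3) by (simp add: pos_divide_le_eq mult.commute)
qed

lemma gpow_pos: "0 < g \<Longrightarrow> gpow g q = g powr q"
  by (simp add: gpow_def)

lemma supersolution_scaling:
  fixes \<tau> F G V A :: real
  assumes \<tau>: "0 < \<tau>" and FG: "0 < F" "0 < G" and V: "0 < V"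
    and small: "\<tau> powr (p + q - m + 1) * (F powr p * G powr q * V) \<le> A"
  shows "- (\<tau> powr (m - 1) * A / V) + (\<tau> * F) powr p * (\<tau> * G) powr q \<le> 0"
proof -
  have "\<tau> powr (m - 1) * \<tau> powr (p + q - m + 1) = \<tau> powr p * \<tau> powr q"
    by (simp add: powr_add[symmetric])
  then have split: "(\<tau> * F) powr p * (\<tau> * G) powr q
      = \<tau> powr (m - 1) * (\<tau> powr (p + q - m + 1) * (F powr p * G powr q))"
    using \<tau> FG by (simp add: powr_mult mult_ac)
  have "\<tau> powr (p + q - m + 1) * (F powr p * G powr q) \<le> A / V"
    using small V by (simp add: pos_le_divide_eq mult.assoc)
  then have "\<tau> powr (m - 1) * (\<tau> powr (p + q - m + 1) * (F powr p * G powr q)) \<le> \<tau> powr (m - 1) * (A / V)"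
    by (rule mult_left_mono) simp
  then show ?thesis
    unfolding split by simp
qed

locale supersolution_exponents =
  fixes m p q \<epsilon> :: real
  assumes m: "1 < m" and p: "0 \<le> p" and q: "m - 1 - p < q" "q < m" and \<epsilon>: "0 < \<epsilon>"
begin

definition "\<kappa> = p + q - m + 1"
definition "\<alpha> = (m * p + q) / \<kappa>"
definition "\<beta> = (m - 1) / \<kappa> + \<epsilon>"
definition "\<gamma> = (m - q) / \<kappa>"
definition "\<sigma> = \<epsilon> / 2"
definition "\<delta> = 1 / \<kappa> + \<sigma> / (m - 1)"

lemma \<kappa>_pos: "0 < \<kappa>"
  using q by (simp add: \<kappa>_def)

lemma \<gamma>_pos: "0 < \<gamma>"
  using \<kappa>_pos q by (simp add: \<gamma>_def)

lemma \<sigma>_pos: "0 < \<sigma>"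
  using \<epsilon> by (simp add: \<sigma>_def)

lemma \<delta>_pos: "0 < \<delta>"
  unfolding \<delta>_def using \<kappa>_pos \<sigma>_pos m by (intro add_pos_pos divide_pos_pos) auto

lemma \<beta>_eq: "\<beta> = \<sigma> + \<delta> * (m - 1)"
proof -
  have "\<delta> * (m - 1) = (m - 1) / \<kappa> + \<sigma>"
    using m by (simp add: \<delta>_def distrib_right)
  then show ?thesis
    by (simp add: \<beta>_def \<sigma>_def)
qed

lemma \<delta>_\<kappa>: "1 \<le> \<delta> * \<kappa>"
proof -
  have "\<delta> * \<kappa> = 1 + \<sigma> * \<kappa> / (m - 1)"
    using \<kappa>_pos by (simp add: \<delta>_def distrib_right)
  moreover have "0 \<le> \<sigma> * \<kappa> / (m - 1)"
    using \<sigma>_pos \<kappa>_pos m by simp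
  ultimately show ?thesis
    by linarith
qed

lemma \<alpha>_eq: "\<alpha> - 1 = (\<gamma> + 1) * (m - 1)"
  using \<kappa>_pos by (simp add: \<alpha>_def \<gamma>_def \<kappa>_def field_simps)

lemma \<alpha>_pos: "0 < \<alpha>"
proof -
  have "0 < (\<gamma> + 1) * (m - 1)"
    using \<gamma>_pos m by simp
  then show ?thesis
    using \<alpha>_eq by linarith
qed

lemma \<beta>_pos: "0 < \<beta>"
proof -
  have "0 < \<delta> * (m - 1)"
    using \<delta>_pos m by simp
  then show ?thesis
    using \<beta>_eq \<sigma>_pos by linarith
qed

lemma power_balance: "- \<gamma> * p + (- \<gamma> - 1) * q + (\<alpha> - 1) = - 1"
proof -
  have "\<gamma> * \<kappa> = m - q"
    using \<kappa>_pos by (simp add: \<gamma>_def)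
  moreover have "- \<gamma> * p + (- \<gamma> - 1) * q + (\<alpha> - 1) = - (\<gamma> * \<kappa>) + (m - 1 - q)"
    by (simp add: \<alpha>_eq \<kappa>_def algebra_simps)
  ultimately show ?thesis
    by simp
qed

lemma log_balance: "- \<delta> * p + - \<delta> * q + \<beta> \<le> \<sigma> - 1"
  using \<delta>_\<kappa> \<beta>_eq by (simp add: \<kappa>_def algebra_simps)

text \<open>In the notation of the header, prof, jump, flux and mass are f, f_k - f_(k+1), Phi and w.
  Level k corresponds to t = k + 5: there ln t \<ge> 1 and neighbouring levels are within
  a factor 2 of each other, as needed for plog_le_double.\<close>

definition prof :: "nat \<Rightarrow> real" where
  "prof k = plog (- \<gamma>) (- \<delta>) (real k + 5)"

definition jump :: "nat \<Rightarrow> real" where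
  "jump k = prof k - prof (Suc k)"

definition flux :: "nat \<Rightarrow> real" where
  "flux k = plog 0 \<sigma> (real k + 5)"

definition mass :: "nat \<Rightarrow> real" where
  "mass k = flux k / jump k powr (m - 1)"

definition grad_prof :: "nat \<Rightarrow> real" where
  "grad_prof k = sqrt ((mass k * (jump k)\<^sup>2 + mass (Suc k) * (jump (Suc k))\<^sup>2)
     / (2 * (mass k + mass (Suc k))))"

lemma prof_pos: "0 < prof k"
  by (simp add: prof_def plog_pos)

lemma prof_Suc_comparable: "(\<lambda>k. prof (Suc k)) \<asymp> (\<lambda>k. plog (- \<gamma>) (- \<delta>) (real k + 5))"
  unfolding prof_def by (rule comparable_plog_shift)

lemma jump_comparable: "jump \<asymp> (\<lambda>k. plog (- \<gamma> - 1) (- \<delta>) (real k + 5))"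
  using comparable_plog_decrement[OF \<gamma>_pos less_imp_le[OF \<delta>_pos]]
  by (simp add: jump_def[abs_def] prof_def)

lemma jump_pos: "0 < jump k"
  using jump_comparable by (rule comparable_pos)

lemma mass_comparable: "mass \<asymp> (\<lambda>k. plog (\<alpha> - 1) \<beta> (real k + 5))"
proof (rule comparable_cong)
  show "(\<lambda>k. flux k * jump k powr (- (m - 1)))
      \<asymp> (\<lambda>k. plog 0 \<sigma> (real k + 5) * plog (- \<gamma> - 1) (- \<delta>) (real k + 5) powr (- (m - 1)))"
    unfolding flux_def[abs_def]
    by (intro comparable_mult comparable_powr jump_comparable comparable_refl) (simp add: plog_pos)
  show "flux k * jump k powr (- (m - 1)) = mass k" for k
    unfolding mass_def powr_minus_divide by simp
  have "plog 0 \<sigma> t * plog (- \<gamma> - 1) (- \<delta>) t powr (- (m - 1))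
      = plog (0 + (- \<gamma> - 1) * - (m - 1)) (\<sigma> + - \<delta> * - (m - 1)) t" if "1 < t" for t
    using that by (simp add: plog_powr plog_mult)
  then show "plog 0 \<sigma> (real k + 5) * plog (- \<gamma> - 1) (- \<delta>) (real k + 5) powr (- (m - 1))
      = plog (\<alpha> - 1) \<beta> (real k + 5)" for k
    by (simp add: \<alpha>_eq \<beta>_eq algebra_simps)
qed

lemma mass_pos: "0 < mass k"
  using mass_comparable by (rule comparable_pos)

lemma mass_mult_jump: "mass k * jump k powr (m - 1) = flux k"
  using jump_pos[of k] by (simp add: mass_def)

lemma grad_prof_comparable: "grad_prof \<asymp> (\<lambda>k. plog (- \<gamma> - 1) (- \<delta>) (real k + 5))"
  unfolding grad_prof_def[abs_def]
  by (rule comparable_quadratic_mean[OF jump_comparable comparable_Suc_plog[OF jump_comparable] mass_pos mass_pos])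

lemma grad_prof_pos: "0 < grad_prof k"
  using grad_prof_comparable by (rule comparable_pos)

lemma mass_partial_sums:
  obtains c C where "0 < c" "0 < C"
    "\<And>j. 1 \<le> j \<Longrightarrow> c * plog \<alpha> \<beta> (real j + 5) \<le> (\<Sum>k<j. mass k)"
    "\<And>j. (\<Sum>k<j. mass k) \<le> C * plog \<alpha> \<beta> (real j + 5)"
proof -
  define H where "H j = plog \<alpha> \<beta> (real j + 5)" for j
  have H_increment: "(\<lambda>k. H (Suc k) - H k) \<asymp> (\<lambda>k. plog (\<alpha> - 1) \<beta> (real k + 5))"
    unfolding H_def using \<alpha>_pos \<beta>_pos by (intro comparable_plog_increment) auto
  have "mass \<asymp> (\<lambda>k. H (Suc k) - H k)"
    using mass_comparable comparable_sym[OF H_increment] by (rule comparable_trans)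
  then obtain c C where c: "0 < c" "0 < C"
    "\<And>j. c * (H j - H 0) \<le> (\<Sum>k<j. mass k)" "\<And>j. (\<Sum>k<j. mass k) \<le> C * (H j - H 0)"
    by (rule comparable_telescope) blast
  have H0: "0 < H 0" "H 0 < H 1"
    using plog_pos comparable_pos[OF H_increment, of 0] by (simp_all add: H_def)
  have "(1 - H 0 / H 1) * H j \<le> H j - H 0" if "1 \<le> j" for j
  proof -
    have "H 1 \<le> H j"
      unfolding H_def using that \<alpha>_pos \<beta>_pos by (intro plog_mono) auto
    then have "H 0 \<le> H 0 / H 1 * H j"
      using H0 by (simp add: field_simps)
    then show ?thesis
      by (simp add: algebra_simps)
  qed
  then have "c * ((1 - H 0 / H 1) * H j) \<le> c * (H j - H 0)" if "1 \<le> j" for j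
    using c(1) that by (intro mult_left_mono) auto
  then have "c * (1 - H 0 / H 1) * H j \<le> (\<Sum>k<j. mass k)" if "1 \<le> j" for j
    using order_trans[OF _ c(3)] that by (simp add: mult.assoc)
  moreover have "(\<Sum>k<j. mass k) \<le> C * H j" for j
    using order_trans[OF c(4)] c(2) H0(1) by simp
  moreover have "0 < c * (1 - H 0 / H 1)"
    using c(1) H0 by simp
  ultimately show ?thesis
    using that c(2) unfolding H_def by blast
qed

lemma vertex_estimate:
  obtains K where "0 < K"
    "\<And>k. prof (Suc k) powr p * grad_prof k powr q * (mass k + mass (Suc k)) \<le> K * (flux (Suc k) - flux k)"
proof -
  have "(\<lambda>k. prof (Suc k) powr p * grad_prof k powr q * (mass k + mass (Suc k)))
      \<asymp> (\<lambda>k. plog (- \<gamma>) (- \<delta>) (real k + 5) powr p * plog (- \<gamma> - 1) (- \<delta>) (real k + 5) powr q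
             * plog (\<alpha> - 1) \<beta> (real k + 5))"
    by (intro comparable_mult comparable_powr comparable_add prof_Suc_comparable grad_prof_comparable
        mass_comparable comparable_Suc_plog)
  moreover have "plog (- \<gamma>) (- \<delta>) t powr p * plog (- \<gamma> - 1) (- \<delta>) t powr q * plog (\<alpha> - 1) \<beta> t
      = plog (- 1) (- \<delta> * p + - \<delta> * q + \<beta>) t" if "1 < t" for t
    using that by (simp add: plog_powr plog_mult power_balance[symmetric])
  ultimately have "(\<lambda>k. prof (Suc k) powr p * grad_prof k powr q * (mass k + mass (Suc k)))
      \<asymp> (\<lambda>k. plog (- 1) (- \<delta> * p + - \<delta> * q + \<beta>) (real k + 5))"
    by (elim comparable_cong) simp_all
  then obtain C where C: "0 < C"
    "\<And>k. prof (Suc k) powr p * grad_prof k powr q * (mass k + mass (Suc k))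
      \<le> C * plog (- 1) (- \<delta> * p + - \<delta> * q + \<beta>) (real k + 5)"
    by (rule comparableE) blast
  obtain c where c: "0 < c" "\<And>k. c * plog (- 1) (\<sigma> - 1) (real k + 5) \<le> flux (Suc k) - flux k"
    using comparable_log_powr_increment[OF \<sigma>_pos] unfolding flux_def by (rule comparableE) blast
  have "prof (Suc k) powr p * grad_prof k powr q * (mass k + mass (Suc k)) \<le> C / c * (flux (Suc k) - flux k)" for k
  proof -
    have "plog (- 1) (- \<delta> * p + - \<delta> * q + \<beta>) (real k + 5) \<le> plog (- 1) (\<sigma> - 1) (real k + 5)"
      using log_balance exp_one_le_of_four_le[of "real k + 5"] by (intro plog_mono_log_exponent) auto
    also have "\<dots> \<le> (flux (Suc k) - flux k) / c"
      using c by (simp add: pos_le_divide_eq mult.commute)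
    finally have "C * plog (- 1) (- \<delta> * p + - \<delta> * q + \<beta>) (real k + 5) \<le> C * ((flux (Suc k) - flux k) / c)"
      using C(1) by (intro mult_left_mono) auto
    with C(2)[of k] show ?thesis
      by simp
  qed
  moreover have "0 < C / c"
    using C(1) c(1) by simp
  ultimately show ?thesis
    using that by blast
qed

lemma supersolution_at_root:
  assumes N: "2 \<le> N" and \<tau>: "0 < \<tau>"
    and small: "\<tau> powr \<kappa> * (prof 0 powr p * (jump 0 / sqrt 2) powr q) \<le> jump 0 powr (m - 1)"
  shows "0 < gradn (tree_V N) (tree_adj N) (level_weight N mass) (\<lambda>y. \<tau> * prof (length y)) []
    \<and> mlap (tree_V N) (tree_adj N) (level_weight N mass) m (\<lambda>y. \<tau> * prof (length y)) []
      + (\<tau> * prof 0) powr p * gradn (tree_V N) (tree_adj N) (level_weight N mass) (\<lambda>y. \<tau> * prof (length y)) [] powr q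
      \<le> 0"
proof -
  have diff: "\<tau> * prof 1 - \<tau> * prof 0 = - (\<tau> * jump 0)"
    by (simp add: jump_def algebra_simps)
  have pos: "0 < \<tau> * jump 0"
    using \<tau> jump_pos by simp
  have "mlap (tree_V N) (tree_adj N) (level_weight N mass) m (\<lambda>y. \<tau> * prof (length y)) []
      = - (\<tau> powr (m - 1) * jump 0 powr (m - 1) / 1)"
    using level_weight_radial_Nil(1)[where w = mass, OF N mass_pos, where m = m and v = "\<lambda>l. \<tau> * prof l"] \<tau> jump_pos[of 0]
    unfolding diff abs_powr_mult_self_neg[OF pos] by (simp add: powr_mult)
  moreover have "gradn (tree_V N) (tree_adj N) (level_weight N mass) (\<lambda>y. \<tau> * prof (length y)) []
      = \<tau> * (jump 0 / sqrt 2)"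
    using level_weight_radial_Nil(2)[where w = mass, OF N mass_pos, where v = "\<lambda>l. \<tau> * prof l"] pos
    unfolding diff by simp
  moreover have G: "0 < jump 0 / sqrt 2"
    using jump_pos by simp
  moreover have small': "\<tau> powr (p + q - m + 1) * (prof 0 powr p * (jump 0 / sqrt 2) powr q * 1)
      \<le> jump 0 powr (m - 1)"
    using small by (simp add: \<kappa>_def)
  moreover note supersolution_scaling[OF \<tau> prof_pos G zero_less_one small']
  ultimately show ?thesis
    using \<tau> pos by simp
qed

lemma supersolution_at_level_Suc:
  assumes N: "2 \<le> N" and x: "x \<in> tree_V N" "length x = Suc k" and \<tau>: "0 < \<tau>"
    and small: "\<tau> powr \<kappa> * (prof (Suc k) powr p * grad_prof k powr q * (mass k + mass (Suc k)))
      \<le> flux (Suc k) - flux k"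
  shows "0 < gradn (tree_V N) (tree_adj N) (level_weight N mass) (\<lambda>y. \<tau> * prof (length y)) x
    \<and> mlap (tree_V N) (tree_adj N) (level_weight N mass) m (\<lambda>y. \<tau> * prof (length y)) x
      + (\<tau> * prof (Suc k)) powr p * gradn (tree_V N) (tree_adj N) (level_weight N mass) (\<lambda>y. \<tau> * prof (length y)) x powr q
      \<le> 0"
proof -
  have diff: "\<tau> * prof k - \<tau> * prof (Suc k) = \<tau> * jump k"
    "\<tau> * prof (Suc (Suc k)) - \<tau> * prof (Suc k) = - (\<tau> * jump (Suc k))"
    by (simp_all add: jump_def algebra_simps)
  have pos: "0 < \<tau> * jump k" "0 < \<tau> * jump (Suc k)"
    using \<tau> jump_pos by simp_all
  have W: "0 < mass k + mass (Suc k)"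
    using mass_pos by (simp add: add_pos_pos)
  have flux_balance: "mass k * (\<tau> * jump k) powr (m - 1) + mass (Suc k) * - ((\<tau> * jump (Suc k)) powr (m - 1))
      = - (\<tau> powr (m - 1) * (flux (Suc k) - flux k))"
    using \<tau> jump_pos by (simp add: powr_mult mass_mult_jump[symmetric] algebra_simps)
  have "mlap (tree_V N) (tree_adj N) (level_weight N mass) m (\<lambda>y. \<tau> * prof (length y)) x
      = - (\<tau> powr (m - 1) * (flux (Suc k) - flux k) / (mass k + mass (Suc k)))"
    using level_weight_radial_Suc(1)[where w = mass, OF N x mass_pos mass_pos, where m = m and v = "\<lambda>l. \<tau> * prof l"]
    unfolding diff abs_powr_mult_self_pos[OF pos(1)] abs_powr_mult_self_neg[OF pos(2)] flux_balance
    by simp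
  moreover have "gradn (tree_V N) (tree_adj N) (level_weight N mass) (\<lambda>y. \<tau> * prof (length y)) x
      = \<tau> * grad_prof k"
  proof -
    define Y where "Y = (mass k * (jump k)\<^sup>2 + mass (Suc k) * (jump (Suc k))\<^sup>2) / (2 * (mass k + mass (Suc k)))"
    have "grad_prof k = sqrt Y"
      by (simp add: grad_prof_def Y_def)
    moreover have "(mass k * (\<tau> * jump k)\<^sup>2 + mass (Suc k) * (- (\<tau> * jump (Suc k)))\<^sup>2)
        / (2 * (mass k + mass (Suc k))) = \<tau>\<^sup>2 * Y"
      using W by (simp add: Y_def power_mult_distrib field_simps)
    ultimately show ?thesis
      using level_weight_radial_Suc(2)[where w = mass, OF N x mass_pos mass_pos, where v = "\<lambda>l. \<tau> * prof l"]
        \<tau> grad_prof_pos[of k]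
      unfolding diff by (simp add: real_sqrt_mult)
  qed
  ultimately show ?thesis
    using supersolution_scaling[OF \<tau> prof_pos grad_prof_pos W small[unfolded \<kappa>_def]] \<tau> grad_prof_pos[of k]
    by simp
qed

lemma scaling_factor:
  obtains \<tau> where "0 < \<tau>"
    "\<tau> powr \<kappa> * (prof 0 powr p * (jump 0 / sqrt 2) powr q) \<le> jump 0 powr (m - 1)"
    "\<And>k. \<tau> powr \<kappa> * (prof (Suc k) powr p * grad_prof k powr q * (mass k + mass (Suc k)))
      \<le> flux (Suc k) - flux k"
proof -
  obtain K where K: "0 < K"
    "\<And>k. prof (Suc k) powr p * grad_prof k powr q * (mass k + mass (Suc k)) \<le> K * (flux (Suc k) - flux k)"
    by (rule vertex_estimate) blast
  define K' where "K' = max K (prof 0 powr p * (jump 0 / sqrt 2) powr q / jump 0 powr (m - 1))"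
  have K': "0 < K'"
    using K(1) by (simp add: K'_def)
  have "prof 0 powr p * (jump 0 / sqrt 2) powr q
      = prof 0 powr p * (jump 0 / sqrt 2) powr q / jump 0 powr (m - 1) * jump 0 powr (m - 1)"
    using jump_pos[of 0] by simp
  also have "\<dots> \<le> K' * jump 0 powr (m - 1)"
    unfolding K'_def by (intro mult_right_mono) simp_all
  finally have "(K' powr (- 1 / \<kappa>)) powr \<kappa> * (prof 0 powr p * (jump 0 / sqrt 2) powr q) \<le> jump 0 powr (m - 1)"
    using \<kappa>_pos K' by (intro powr_scaling_absorbs) simp_all
  moreover have "(K' powr (- 1 / \<kappa>)) powr \<kappa> * (prof (Suc k) powr p * grad_prof k powr q * (mass k + mass (Suc k)))
      \<le> flux (Suc k) - flux k" for k
  proof (rule powr_scaling_absorbs[OF \<kappa>_pos K'])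
    show "0 \<le> flux (Suc k) - flux k"
      using comparable_pos[OF comparable_log_powr_increment[OF \<sigma>_pos], of k] by (simp add: flux_def)
    then have "K * (flux (Suc k) - flux k) \<le> K' * (flux (Suc k) - flux k)"
      by (intro mult_right_mono) (simp_all add: K'_def)
    with K(2)[of k]
    show "prof (Suc k) powr p * grad_prof k powr q * (mass k + mass (Suc k)) \<le> K' * (flux (Suc k) - flux k)"
      by (rule order_trans)
  qed
  moreover have "0 < K' powr (- 1 / \<kappa>)"
    using K' by simp
  ultimately show ?thesis
    using that by blast
qed

lemma radial_supersolution:
  assumes N: "2 \<le> N"
  shows "\<exists>u. nontriv_pos_solution (tree_V N) (tree_adj N) (level_weight N mass) m p q u"
proof -
  obtain \<tau> where \<tau>: "0 < \<tau>"
    and root: "\<tau> powr \<kappa> * (prof 0 powr p * (jump 0 / sqrt 2) powr q) \<le> jump 0 powr (m - 1)"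
    and level: "\<And>k. \<tau> powr \<kappa> * (prof (Suc k) powr p * grad_prof k powr q * (mass k + mass (Suc k)))
      \<le> flux (Suc k) - flux k"
    by (rule scaling_factor) blast
  define u where "u x = \<tau> * prof (length x)" for x :: "nat list"
  have "nontriv_pos_solution (tree_V N) (tree_adj N) (level_weight N mass) m p q u"
    unfolding nontriv_pos_solution_def
  proof (intro conjI ballI)
    show "0 < u x" for x
      using \<tau> prof_pos by (simp add: u_def)
    have "[0] \<in> tree_V N"
      using snoc_in_tree_V_iff[OF Nil_in_tree_V, of 0 N] N by simp
    moreover have "u [] \<noteq> u [0]"
      using \<tau> jump_pos[of 0] by (simp add: u_def jump_def)
    ultimately show "\<exists>x\<in>tree_V N. \<exists>y\<in>tree_V N. u x \<noteq> u y"
      using Nil_in_tree_V by blast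
  next
    fix x
    assume x: "x \<in> tree_V N"
    have "0 < gradn (tree_V N) (tree_adj N) (level_weight N mass) u x
      \<and> mlap (tree_V N) (tree_adj N) (level_weight N mass) m u x
        + u x powr p * gradn (tree_V N) (tree_adj N) (level_weight N mass) u x powr q \<le> 0"
    proof (cases "length x")
      case 0
      then show ?thesis
        using supersolution_at_root[OF N \<tau> root] by (simp add: u_def[abs_def])
    next
      case (Suc k)
      then show ?thesis
        using supersolution_at_level_Suc[OF N x Suc \<tau> level] by (simp add: u_def[abs_def])
    qed
    then show "q < 0 \<longrightarrow> 0 < gradn (tree_V N) (tree_adj N) (level_weight N mass) u x"
      "mlap (tree_V N) (tree_adj N) (level_weight N mass) m u x
        + u x powr p * gpow (gradn (tree_V N) (tree_adj N) (level_weight N mass) u x) q \<le> 0"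
      by (simp_all add: gpow_pos)
  qed
  then show ?thesis
    by blast
qed

lemma W_o_growth:
  assumes N: "2 \<le> N" and r: "r \<in> tree_V N"
  obtains c C where "0 < c" "0 < C"
    "\<And>n. 2 \<le> n \<Longrightarrow> c * plog \<alpha> \<beta> (real n) \<le> W_o (tree_V N) (tree_adj N) (level_weight N mass) r n
      \<and> W_o (tree_V N) (tree_adj N) (level_weight N mass) r n \<le> C * plog \<alpha> \<beta> (real n)"
proof -
  obtain c C where cC: "0 < c" "0 < C"
    and S: "\<And>j. 1 \<le> j \<Longrightarrow> c * plog \<alpha> \<beta> (real j + 5) \<le> (\<Sum>k<j. mass k)"
      "\<And>j. (\<Sum>k<j. mass k) \<le> C * plog \<alpha> \<beta> (real j + 5)"
    by (rule mass_partial_sums) blast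
  obtain W\<^sub>0 where W\<^sub>0: "0 < W\<^sub>0" "\<And>n. W\<^sub>0 \<le> W_o (tree_V N) (tree_adj N) (level_weight N mass) r n"
    using W_o_level_weight_pos[where w = mass, OF N r mass_pos] by blast
  have W: "(\<Sum>k<n - length r. mass k) \<le> W_o (tree_V N) (tree_adj N) (level_weight N mass) r n"
    "W_o (tree_V N) (tree_adj N) (level_weight N mass) r n \<le> (\<Sum>k<n + 1 + length r. mass k)" for n
    using W_o_level_weight_bounds[where w = mass, OF N r less_imp_le[OF mass_pos]] by blast+
  show ?thesis
    using plog_growth_sandwich[OF less_imp_le[OF \<alpha>_pos] less_imp_le[OF \<beta>_pos] cC S W W\<^sub>0] that by blast
qed

end

theorem mainTheorem8:
  fixes N :: nat and r :: "nat list" and m p q \<epsilon> :: real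
  assumes "N \<ge> 2" and "r \<in> tree_V N"
    and "m > 1" and "p \<ge> 0" and "m - 1 - p < q" and "q < m"
    and "\<epsilon> > 0"
  shows "\<exists>\<mu>. is_weight (tree_V N) (tree_adj N) \<mu> \<and>
     (\<exists>c C. c > 0 \<and> C > 0 \<and> (\<forall>n::nat. n \<ge> 2 \<longrightarrow>
        c * (real n powr ((m * p + q) / (p + q - m + 1)) * ln (real n) powr ((m - 1) / (p + q - m + 1) + \<epsilon>))
          \<le> W_o (tree_V N) (tree_adj N) \<mu> r n \<and>
        W_o (tree_V N) (tree_adj N) \<mu> r n
          \<le> C * (real n powr ((m * p + q) / (p + q - m + 1)) * ln (real n) powr ((m - 1) / (p + q - m + 1) + \<epsilon>)))) \<and>
     (\<exists>u. nontriv_pos_solution (tree_V N) (tree_adj N) \<mu> m p q u)"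
proof -
  interpret supersolution_exponents m p q \<epsilon>
    using assms by unfold_locales auto
  have exponents: "(m * p + q) / (p + q - m + 1) = \<alpha>" "(m - 1) / (p + q - m + 1) + \<epsilon> = \<beta>"
    by (simp_all add: \<alpha>_def \<beta>_def \<kappa>_def)
  obtain c C where "0 < c" "0 < C"
    "\<And>n. 2 \<le> n \<Longrightarrow> c * plog \<alpha> \<beta> (real n) \<le> W_o (tree_V N) (tree_adj N) (level_weight N mass) r n
      \<and> W_o (tree_V N) (tree_adj N) (level_weight N mass) r n \<le> C * plog \<alpha> \<beta> (real n)"
    by (rule W_o_growth[OF assms(1,2)]) blast
  then show ?thesis
    unfolding exponents plog_def
    using is_weight_level_weight[where w = mass, OF assms(1) mass_pos] radial_supersolution[OF assms(1)] by blast
qed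
end
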